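(* Let $a<b$, $n\in\mathbb N$, $\alpha=(\alpha_1,\ldots,\alpha_n)$ with $\alpha_j\in(0,1)$, and fix $z_a\in\mathbb R$, $x_a,x_b\in\mathbb R^n$. Call $x=(x_1,\ldots,x_n)$ admissible if $x\in C^1([a,b],\mathbb R^n)$, ${^C_aD^\alpha_t}x:=({^C_aD^{\alpha_1}_t}x_1,\ldots,{^C_aD^{\alpha_n}_t}x_n)\in C^1([a,b],\mathbb R^n)$, $x(a)=x_a$ and $x(b)=x_b$. Let $L:[a,b]\times\mathbb R^{2n+1}\to\mathbb R$, $L=L(t,x,v,z)$, be of class $C^1$. For admissible $x$, let $z[x;\cdot]$ denote the solution of $$\frac{dz}{dt}=L(t,x(t),{^C_aD^\alpha_t}x(t),z(t)),\quad t\in[a,b],\qquad z(a)=z_a,$$ and consider the functional $x\mapsto z[x;b]$. Write $[x,z](t):=(t,x(t),{^C_aD^\alpha_t}x(t),z(t))$ and $\lambda(t):=\exp\left(-\int_a^t\frac{\partial L}{\partial z}[x,z](\tau)\,d\tau\right)$, and assume that for each $j$ the right Riemann–Liouville derivative ${_tD^{\alpha_j}_b}\left(\lambda(t)\frac{\partial L}{\partial {^C_aD^{\alpha_j}_t}x_j}[x,z](t)\right)$ exists and is continuous on $[a,b]$. If $x$ is an admissible function at which $z[x;b]$ attains an extremum (i.e. $\frac{d}{d\epsilon}z[x+\epsilon\eta;b]\big|_{\epsilon=0}=0$ for every $\eta\in C^1([a,b],\mathbb R^n)$ with ${^C_aD^\alpha_t}\eta\in C^1([a,b],\mathbb R^n)$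 and $\eta(a)=\eta(b)=0$), then for all $t\in[a,b]$ and $j=1,\ldots,n$, $$\lambda(t)\frac{\partial L}{\partial x_j}[x,z](t)+{_tD^{\alpha_j}_b}\left(\lambda(t)\frac{\partial L}{\partial {^C_aD^{\alpha_j}_t}x_j}[x,z](t)\right)=0,$$ where $\frac{\partial L}{\partial x_j}$, $\frac{\partial L}{\partial {^C_aD^{\alpha_j}_t}x_j}$, $\frac{\partial L}{\partial z}$ denote the partial derivatives of $L$ with respect to the $j$-th component of its second argument, the $j$-th component of its third argument, and its last argument, respectively.
   Context: For $\alpha\in(0,1)$ and $f:[a,b]\to\mathbb R$: the left Caputo derivative is ${^C_aD^\alpha_t}f(t)=\frac{1}{\Gamma(1-\alpha)}\int_a^t(t-\tau)^{-\alpha}f'(\tau)\,d\tau$; the right Riemann–Liouville integral is ${_tI^{\alpha}_b}f(t)=\frac{1}{\Gamma(\alpha)}\int_t^b(\tau-t)^{\alpha-1}f(\tau)\,d\tau$; the right Riemann–Liouville derivative is ${_tD^\alpha_b}f(t)=\frac{-1}{\Gamma(1-\alpha)}\frac{d}{dt}\int_t^b(\tau-t)^{-\alpha}f(\tau)\,d\tau$. The solution $z[x;t]$ is assumed to exist on $[a,b]$ and to depend differentiably on a parameter $\epsilon$ when $x$ is replaced by $x+\epsilon\eta$; the initial value $z(a)=z_a$ is the same for all argument functions. *)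

theory Defs
  imports "HOL-Analysis.Analysis"
begin

definition C1_on :: "real \<Rightarrow> real \<Rightarrow> (real \<Rightarrow> 'a::real_normed_vector) \<Rightarrow> bool" where
  "C1_on a b f \<longleftrightarrow> (\<exists>f'. continuous_on {a..b} f' \<and>
      (\<forall>t\<in>{a..b}. (f has_vector_derivative f' t) (at t within {a..b})))"

definition caputo :: "real \<Rightarrow> real \<Rightarrow> (real \<Rightarrow> real) \<Rightarrow> real \<Rightarrow> real" where
  "caputo \<alpha> a f t = (1 / Gamma (1 - \<alpha>)) *
      integral {a..t} (\<lambda>\<tau>. (t - \<tau>) powr (- \<alpha>) * vector_derivative f (at \<tau> within {a..t}))"

definition caputo_vec :: "real^'n \<Rightarrow> real \<Rightarrow> (real \<Rightarrow> real^'n) \<Rightarrow> real \<Rightarrow> real^'n" where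
  "caputo_vec \<alpha> a x t = (\<chi> j. caputo (\<alpha> $ j) a (\<lambda>s. x s $ j) t)"

definition rl_right_int :: "real \<Rightarrow> real \<Rightarrow> (real \<Rightarrow> real) \<Rightarrow> real \<Rightarrow> real" where
  "rl_right_int \<alpha> b f t = (1 / Gamma \<alpha>) * integral {t..b} (\<lambda>\<tau>. (\<tau> - t) powr (\<alpha> - 1) * f \<tau>)"

definition rl_right_deriv :: "real \<Rightarrow> real \<Rightarrow> real \<Rightarrow> (real \<Rightarrow> real) \<Rightarrow> real \<Rightarrow> real" where
  "rl_right_deriv \<alpha> a b f t = - vector_derivative (rl_right_int (1 - \<alpha>) b f) (at t within {a..b})"

definition admissible :: "real^'n \<Rightarrow> real \<Rightarrow> real \<Rightarrow> real^'n \<Rightarrow> real^'n \<Rightarrow> (real \<Rightarrow> real^'n) \<Rightarrow> bool" where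
  "admissible \<alpha> a b xa xb x \<longleftrightarrow>
     C1_on a b x \<and> C1_on a b (caputo_vec \<alpha> a x) \<and> x a = xa \<and> x b = xb"

definition variation :: "real^'n \<Rightarrow> real \<Rightarrow> real \<Rightarrow> (real \<Rightarrow> real^'n) \<Rightarrow> bool" where
  "variation \<alpha> a b \<eta> \<longleftrightarrow>
     C1_on a b \<eta> \<and> C1_on a b (caputo_vec \<alpha> a \<eta>) \<and> \<eta> a = 0 \<and> \<eta> b = 0"

definition xz :: "real^'n \<Rightarrow> real \<Rightarrow> (real \<Rightarrow> real^'n) \<Rightarrow> (real \<Rightarrow> real) \<Rightarrow> real
                  \<Rightarrow> real \<times> (real^'n) \<times> (real^'n) \<times> real" where
  "xz \<alpha> a x z t = (t, x t, caputo_vec \<alpha> a x t, z t)"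

definition solves_ivp :: "real \<Rightarrow> real \<Rightarrow> (real \<times> (real^'n) \<times> (real^'n) \<times> real \<Rightarrow> real) \<Rightarrow> real^'n
                          \<Rightarrow> real \<Rightarrow> (real \<Rightarrow> real^'n) \<Rightarrow> (real \<Rightarrow> real) \<Rightarrow> bool" where
  "solves_ivp a b L \<alpha> za x z \<longleftrightarrow> z a = za \<and>
     (\<forall>t\<in>{a..b}. (z has_real_derivative L (xz \<alpha> a x z t)) (at t within {a..b}))"

end

theory Submission
  imports Defs
begin

text \<open>Perturb the admissible function \<open>x\<close> by \<open>\<epsilon>\<eta>\<close>. The difference \<open>w\<close> of the two solutions of the
  initial value problem satisfies \<open>w' = L[x + \<epsilon>\<eta>, z + w] - L[x, z]\<close>, so a Gronwall estimate gives
  \<open>w = O(\<epsilon>)\<close> uniformly on \<open>[a, b]\<close>. Linearising \<open>L\<close> along the solution and multiplying by the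
  integrating factor \<open>\<lambda>\<close> then yields the first variation
  \<open>\<lambda>(b) \<cdot> d/d\<epsilon> z[x + \<epsilon>\<eta>; b] = \<integral>\<^sub>a\<^sup>b \<lambda> (\<partial>\<^sub>xL \<bullet> \<eta> + \<partial>\<^sub>vL \<bullet> D\<^sup>\<alpha>\<eta>)\<close>, which vanishes at an
  extremum. For \<open>\<eta> = (t - a)\<^sup>m (b - t) e\<^sub>j\<close> with \<open>m \<ge> 2\<close> the Caputo derivative is an explicit
  \<open>C\<^sup>1\<close> combination of powers of \<open>t - a\<close>; Fubini on the triangle \<open>a \<le> \<tau> \<le> t \<le> b\<close> and an
  integration by parts move it onto \<open>\<lambda> \<partial>\<^sub>vL\<close> as a right Riemann--Liouville derivative. So the
  Euler--Lagrange expression is orthogonal to \<open>(t - a)\<^sup>k (t - a)\<^sup>2 (b - t)\<close> for all \<open>k\<close>, and the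
  Weierstrass approximation theorem makes it vanish.\<close>

section \<open>Weakly singular kernels and the Dirichlet formula\<close>

lemma has_real_derivative_powr_shift:
  assumes "c < x"
  shows "((\<lambda>x. (x - c) powr r) has_real_derivative r * (x - c) powr (r - 1)) (at x within S)"
proof -
  have "((\<lambda>x. x - c) has_real_derivative 1) (at x within S)"
    by (auto intro!: derivative_eq_intros)
  from DERIV_chain2[OF has_real_derivative_powr this] assms show ?thesis by simp
qed

lemma has_integral_powr_kernel_right:
  fixes c d \<alpha> :: real
  assumes "c \<le> d" "\<alpha> < 1"
  shows "((\<lambda>\<tau>. (\<tau> - c) powr (-\<alpha>)) has_integral (d - c) powr (1 - \<alpha>) / (1 - \<alpha>)) {c..d}"
proof -
  have "((\<lambda>\<tau>. (\<tau> - c) powr (-\<alpha>)) has_integral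
          (d - c) powr (1 - \<alpha>) / (1 - \<alpha>) - (c - c) powr (1 - \<alpha>) / (1 - \<alpha>)) {c..d}"
  proof (rule fundamental_theorem_of_calculus_interior)
    show "continuous_on {c..d} (\<lambda>\<tau>. (\<tau> - c) powr (1 - \<alpha>) / (1 - \<alpha>))"
      using assms by (intro continuous_intros continuous_on_powr') auto
    show "((\<lambda>\<tau>. (\<tau> - c) powr (1 - \<alpha>) / (1 - \<alpha>)) has_vector_derivative (\<tau> - c) powr (-\<alpha>)) (at \<tau>)"
      if "\<tau> \<in> {c<..<d}" for \<tau>
      using that assms DERIV_cdivide[OF has_real_derivative_powr_shift[of c \<tau> "1 - \<alpha>" UNIV], of "1 - \<alpha>"]
      unfolding has_real_derivative_iff_has_vector_derivative[symmetric] by simp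
  qed (use assms in auto)
  then show ?thesis using assms by simp
qed

lemma has_integral_powr_kernel_left:
  fixes c d \<alpha> :: real
  assumes "c \<le> d" "\<alpha> < 1"
  shows "((\<lambda>\<tau>. (d - \<tau>) powr (-\<alpha>)) has_integral (d - c) powr (1 - \<alpha>) / (1 - \<alpha>)) {c..d}"
  using has_integral_powr_kernel_right[of "-d" "-c" \<alpha>] assms
  by (subst has_integral_reflect_real[symmetric]) (simp add: algebra_simps)

lemma absolutely_integrable_continuous_times_kernel:
  fixes f k :: "real \<Rightarrow> real"
  assumes "continuous_on {c..d} f" "(k has_integral K) {c..d}" "\<And>\<tau>. k \<tau> \<ge> 0"
  shows "(\<lambda>\<tau>. f \<tau> * k \<tau>) absolutely_integrable_on {c..d}"
proof (rule absolutely_integrable_bounded_measurable_product_real)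
  show "f \<in> borel_measurable (lebesgue_on {c..d})"
    using assms by (intro continuous_imp_measurable_on_sets_lebesgue) auto
  show "bounded (f ` {c..d})"
    using assms by (intro compact_imp_bounded compact_continuous_image) auto
  show "k absolutely_integrable_on {c..d}"
    using assms by (intro nonnegative_absolutely_integrable_1) (auto simp: has_integral_integrable)
qed auto

lemma set_integrable_lborel_if_absolutely_integrable:
  fixes f :: "'a::euclidean_space \<Rightarrow> real"
  assumes "f absolutely_integrable_on S" "(\<lambda>x. indicator S x * f x) \<in> borel_measurable borel"
  shows "set_integrable lborel S f"
  using assms unfolding set_integrable_def
  by (subst (asm) integrable_completion) (auto simp: measurable_lborel1)

lemma borel_measurable_indicator_times_continuous:
  fixes f :: "real \<Rightarrow> real"
  assumes "continuous_on {c..d} f"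
  shows "(\<lambda>x. indicator {c..d} x * f x) \<in> borel_measurable borel"
  using borel_measurable_continuous_on_indicator[OF _ assms] by simp

lemma set_integrable_kernel_left:
  fixes f :: "real \<Rightarrow> real"
  assumes "c \<le> d" "\<alpha> < 1" "continuous_on {c..d} f"
  shows "set_integrable lborel {c..d} (\<lambda>\<tau>. f \<tau> * (d - \<tau>) powr (-\<alpha>))"
proof (rule set_integrable_lborel_if_absolutely_integrable)
  show "(\<lambda>\<tau>. f \<tau> * (d - \<tau>) powr (-\<alpha>)) absolutely_integrable_on {c..d}"
    by (rule absolutely_integrable_continuous_times_kernel[OF assms(3) has_integral_powr_kernel_left[OF assms(1,2)]]) simp
  have "(\<lambda>x. (indicator {c..d} x * f x) * (d - x) powr (-\<alpha>)) \<in> borel_measurable borel"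
    using borel_measurable_indicator_times_continuous[OF assms(3)] by measurable
  then show "(\<lambda>x. indicator {c..d} x * (f x * (d - x) powr (-\<alpha>))) \<in> borel_measurable borel"
    by (simp add: mult_ac)
qed

lemma set_integrable_kernel_right:
  fixes f :: "real \<Rightarrow> real"
  assumes "c \<le> d" "\<alpha> < 1" "continuous_on {c..d} f"
  shows "set_integrable lborel {c..d} (\<lambda>\<tau>. f \<tau> * (\<tau> - c) powr (-\<alpha>))"
proof (rule set_integrable_lborel_if_absolutely_integrable)
  show "(\<lambda>\<tau>. f \<tau> * (\<tau> - c) powr (-\<alpha>)) absolutely_integrable_on {c..d}"
    by (rule absolutely_integrable_continuous_times_kernel[OF assms(3) has_integral_powr_kernel_right[OF assms(1,2)]]) simp
  have "(\<lambda>x. (indicator {c..d} x * f x) * (x - c) powr (-\<alpha>)) \<in> borel_measurable borel"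
    using borel_measurable_indicator_times_continuous[OF assms(3)] by measurable
  then show "(\<lambda>x. indicator {c..d} x * (f x * (x - c) powr (-\<alpha>))) \<in> borel_measurable borel"
    by (simp add: mult_ac)
qed

definition triangle :: "real \<Rightarrow> real \<Rightarrow> (real \<times> real) set" where
  "triangle a b = {(t, \<tau>). a \<le> \<tau> \<and> \<tau> \<le> t \<and> t \<le> b}"

lemma triangle_sets_borel [measurable]: "triangle a b \<in> sets borel"
proof -
  have "triangle a b = {p. a \<le> snd p \<and> snd p \<le> fst p \<and> fst p \<le> b}"
    by (auto simp: triangle_def)
  also have "closed \<dots>"
    by (intro closed_Collect_conj closed_Collect_le continuous_intros)
  finally show ?thesis by simp
qed

lemma integrable_triangle_powr_kernel:
  assumes "a \<le> b" "\<alpha> < 1"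
  shows "integrable (lborel \<Otimes>\<^sub>M lborel)
           (\<lambda>(t, \<tau>). indicator (triangle a b) (t, \<tau>) * (t - \<tau>) powr (-\<alpha>) :: real)"
    (is "integrable _ (\<lambda>(t, \<tau>). ?G t \<tau>)")
proof (rule integrableI_bounded)
  show meas: "(\<lambda>(t, \<tau>). ?G t \<tau>) \<in> borel_measurable (lborel \<Otimes>\<^sub>M lborel)" by measurable
  have G: "?G t \<tau> = indicator {a..b} t * (indicator {a..t} \<tau> * (t - \<tau>) powr (-\<alpha>))" for t \<tau>
    by (auto simp: triangle_def indicator_def)
  have inner: "(\<integral>\<^sup>+\<tau>. ennreal (norm (?G t \<tau>)) \<partial>lborel)
        = ennreal (indicator {a..b} t * ((t - a) powr (1 - \<alpha>) / (1 - \<alpha>)))" for t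
  proof (cases "t \<in> {a..b}")
    case True
    have "(\<integral>\<^sup>+\<tau>. ennreal (norm (?G t \<tau>)) \<partial>lborel)
        = (\<integral>\<^sup>+\<tau>. ennreal (indicator {a..t} \<tau> * (t - \<tau>) powr (-\<alpha>)) \<partial>lborel)"
      using True by (intro nn_integral_cong) (auto simp: triangle_def indicator_def)
    also have "\<dots> = ennreal ((t - a) powr (1 - \<alpha>) / (1 - \<alpha>))"
      using True assms by (intro nn_integral_has_integral_lebesgue has_integral_powr_kernel_left) auto
    finally show ?thesis using True by simp
  qed (simp add: G)
  have "(\<integral>\<^sup>+ p. ennreal (norm (case p of (t, \<tau>) \<Rightarrow> ?G t \<tau>)) \<partial>(lborel \<Otimes>\<^sub>M lborel))
      = (\<integral>\<^sup>+t. (\<integral>\<^sup>+\<tau>. ennreal (norm (?G t \<tau>)) \<partial>lborel) \<partial>lborel)"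
    using meas by (subst lborel.nn_integral_fst[symmetric]) (auto simp: case_prod_beta')
  also have "\<dots> = (\<integral>\<^sup>+t. ennreal (indicator {a..b} t * ((t - a) powr (1 - \<alpha>) / (1 - \<alpha>))) \<partial>lborel)"
    by (simp only: inner)
  also have "\<dots> \<le> (\<integral>\<^sup>+t. ennreal (indicator {a..b} t * ((b - a) powr (1 - \<alpha>) / (1 - \<alpha>))) \<partial>lborel)"
    using assms by (intro nn_integral_mono ennreal_leI)
      (auto simp: indicator_def intro!: divide_right_mono powr_mono2)
  also have "\<dots> = ennreal ((b - a) * ((b - a) powr (1 - \<alpha>) / (1 - \<alpha>)))"
    using assms by (intro nn_integral_has_integral_lebesgue)
      (auto intro!: has_integral_const_real[THEN has_integral_eq_rhs])
  finally show "(\<integral>\<^sup>+ p. ennreal (norm (case p of (t, \<tau>) \<Rightarrow> ?G t \<tau>)) \<partial>(lborel \<Otimes>\<^sub>M lborel)) < \<infinity>"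
    by (simp add: order_le_less_trans)
qed

lemma integrable_triangle_powr_kernel_product:
  fixes f g :: "real \<Rightarrow> real"
  assumes ab: "a \<le> b" and \<alpha>: "\<alpha> < 1"
    and f: "continuous_on {a..b} f" and g: "continuous_on {a..b} g"
  shows "integrable (lborel \<Otimes>\<^sub>M lborel) (\<lambda>(t, \<tau>). (indicator {a..b} t * g t) * (indicator {a..b} \<tau> * f \<tau>)
           * (indicator (triangle a b) (t, \<tau>) * (t - \<tau>) powr (-\<alpha>)))"
    (is "integrable _ (\<lambda>(t, \<tau>). ?g t * ?f \<tau> * ?K t \<tau>)")
proof -
  have [measurable]: "?g \<in> borel_measurable borel" "?f \<in> borel_measurable borel"
    using f g by (auto intro: borel_measurable_indicator_times_continuous)
  obtain Mg where Mg: "\<And>t. t \<in> {a..b} \<Longrightarrow> \<bar>g t\<bar> \<le> Mg"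
    using compact_imp_bounded[OF compact_continuous_image[OF g compact_Icc]]
    by (auto simp: bounded_iff) (meson atLeastAtMost_iff)
  obtain Mf where Mf: "\<And>t. t \<in> {a..b} \<Longrightarrow> \<bar>f t\<bar> \<le> Mf"
    using compact_imp_bounded[OF compact_continuous_image[OF f compact_Icc]]
    by (auto simp: bounded_iff) (meson atLeastAtMost_iff)
  have int: "integrable (lborel \<Otimes>\<^sub>M lborel) (\<lambda>p. Mg * Mf * (case p of (t, \<tau>) \<Rightarrow> ?K t \<tau>))"
    by (intro integrable_mult_right integrable_triangle_powr_kernel ab \<alpha>)
  have meas: "(\<lambda>(t, \<tau>). ?g t * ?f \<tau> * ?K t \<tau>) \<in> borel_measurable (lborel \<Otimes>\<^sub>M lborel)"
    by measurable
  have bound: "norm (?g t * ?f \<tau> * ?K t \<tau>) \<le> norm (Mg * Mf * ?K t \<tau>)" for t \<tau>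
  proof (cases "t \<in> {a..b} \<and> \<tau> \<in> {a..b}")
    case True
    then have "0 \<le> Mg" "0 \<le> Mf" using Mg Mf by (meson abs_ge_zero order_trans)+
    with True Mg Mf show ?thesis by (auto simp: abs_mult intro!: mult_mono)
  qed auto
  have "AE p in lborel \<Otimes>\<^sub>M lborel. norm (case p of (t, \<tau>) \<Rightarrow> ?g t * ?f \<tau> * ?K t \<tau>)
      \<le> norm (Mg * Mf * (case p of (t, \<tau>) \<Rightarrow> ?K t \<tau>))"
    by (rule AE_I2) (simp only: case_prod_beta bound)
  then show ?thesis by (rule Bochner_Integration.integrable_bound[OF int meas])
qed

lemma Dirichlet_formula_powr_kernel:
  fixes f g :: "real \<Rightarrow> real"
  assumes ab: "a \<le> b" and \<alpha>: "\<alpha> < 1"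
    and f: "continuous_on {a..b} f" and g: "continuous_on {a..b} g"
  shows "integral {a..b} (\<lambda>t. g t * integral {a..t} (\<lambda>\<tau>. f \<tau> * (t - \<tau>) powr (-\<alpha>)))
       = integral {a..b} (\<lambda>\<tau>. f \<tau> * integral {\<tau>..b} (\<lambda>t. g t * (t - \<tau>) powr (-\<alpha>)))"
proof -
  define \<Phi> where "\<Phi> t = g t * integral {a..t} (\<lambda>\<tau>. f \<tau> * (t - \<tau>) powr (-\<alpha>))" for t
  define \<Psi> where "\<Psi> \<tau> = f \<tau> * integral {\<tau>..b} (\<lambda>t. g t * (t - \<tau>) powr (-\<alpha>))" for \<tau>
  define F where "F t \<tau> = (indicator {a..b} t * g t) * (indicator {a..b} \<tau> * f \<tau>)
                             * (indicator (triangle a b) (t, \<tau>) * (t - \<tau>) powr (-\<alpha>))" for t \<tau>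
  have intF: "integrable (lborel \<Otimes>\<^sub>M lborel) (case_prod F)"
    unfolding F_def by (rule integrable_triangle_powr_kernel_product[OF ab \<alpha> f g])
  have inner_fst: "(\<integral>\<tau>. F t \<tau> \<partial>lborel) = indicator {a..b} t * \<Phi> t" for t
  proof (cases "t \<in> {a..b}")
    case True
    have "(\<integral>\<tau>. F t \<tau> \<partial>lborel)
        = (\<integral>\<tau>. g t * (indicator {a..t} \<tau> *\<^sub>R (f \<tau> * (t - \<tau>) powr (-\<alpha>))) \<partial>lborel)"
      using True by (intro Bochner_Integration.integral_cong) (auto simp: F_def triangle_def indicator_def)
    also have "\<dots> = g t * integral {a..t} (\<lambda>\<tau>. f \<tau> * (t - \<tau>) powr (-\<alpha>))"
      using set_borel_integral_eq_integral(2)[OF set_integrable_kernel_left[OF _ \<alpha>, of a t f]] True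
        continuous_on_subset[OF f, of "{a..t}"]
      by (auto simp: set_lebesgue_integral_def)
    finally show ?thesis using True by (simp add: \<Phi>_def)
  qed (simp add: F_def)
  have inner_snd: "(\<integral>t. F t \<tau> \<partial>lborel) = indicator {a..b} \<tau> * \<Psi> \<tau>" for \<tau>
  proof (cases "\<tau> \<in> {a..b}")
    case True
    have "(\<integral>t. F t \<tau> \<partial>lborel)
        = (\<integral>t. f \<tau> * (indicator {\<tau>..b} t *\<^sub>R (g t * (t - \<tau>) powr (-\<alpha>))) \<partial>lborel)"
      using True by (intro Bochner_Integration.integral_cong) (auto simp: F_def triangle_def indicator_def)
    also have "\<dots> = f \<tau> * integral {\<tau>..b} (\<lambda>t. g t * (t - \<tau>) powr (-\<alpha>))"
      using set_borel_integral_eq_integral(2)[OF set_integrable_kernel_right[OF _ \<alpha>, of \<tau> b g]] True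
        continuous_on_subset[OF g, of "{\<tau>..b}"]
      by (auto simp: set_lebesgue_integral_def)
    finally show ?thesis using True by (simp add: \<Psi>_def)
  qed (simp add: F_def)
  have \<Phi>: "set_integrable lborel {a..b} \<Phi>"
    using lborel_pair.integrable_fst[OF intF] by (simp add: set_integrable_def inner_fst)
  have \<Psi>: "set_integrable lborel {a..b} \<Psi>"
    using lborel_pair.integrable_snd[OF intF] by (simp add: set_integrable_def inner_snd)
  have "integral {a..b} \<Phi> = (\<integral>t. (\<integral>\<tau>. F t \<tau> \<partial>lborel) \<partial>lborel)"
    using set_borel_integral_eq_integral(2)[OF \<Phi>] by (simp add: inner_fst set_lebesgue_integral_def)
  also have "\<dots> = (\<integral>\<tau>. (\<integral>t. F t \<tau> \<partial>lborel) \<partial>lborel)"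
    by (rule lborel_pair.Fubini_integral[OF intF, symmetric])
  also have "\<dots> = integral {a..b} \<Psi>"
    using set_borel_integral_eq_integral(2)[OF \<Psi>] by (simp add: inner_snd set_lebesgue_integral_def)
  finally show ?thesis unfolding \<Phi>_def \<Psi>_def .
qed

section \<open>Caputo derivatives\<close>

lemma C1_onI_real:
  fixes f f' :: "real \<Rightarrow> real"
  assumes "\<And>t. t \<in> {a..b} \<Longrightarrow> (f has_real_derivative f' t) (at t within {a..b})"
    and "continuous_on {a..b} f'"
  shows "C1_on a b f"
  using assms unfolding C1_on_def has_real_derivative_iff_has_vector_derivative by blast

lemma C1_onE_real:
  fixes f :: "real \<Rightarrow> real"
  assumes "C1_on a b f"
  obtains f' where "\<And>t. t \<in> {a..b} \<Longrightarrow> (f has_real_derivative f' t) (at t within {a..b})"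
    and "continuous_on {a..b} f'"
  using assms unfolding C1_on_def has_real_derivative_iff_has_vector_derivative by blast

lemma C1_on_imp_continuous_on: "C1_on a b f \<Longrightarrow> continuous_on {a..b} f"
  unfolding C1_on_def continuous_on_eq_continuous_within
  by (metis has_vector_derivative_continuous)

lemma C1_on_cong:
  assumes "\<And>t. t \<in> {a..b} \<Longrightarrow> f t = g t" "C1_on a b f"
  shows "C1_on a b g"
  using assms unfolding C1_on_def by (metis has_vector_derivative_transform)

lemma C1_on_add_scaleR:
  assumes "C1_on a b f" "C1_on a b g"
  shows "C1_on a b (\<lambda>s. f s + c *\<^sub>R g s)"
proof -
  obtain f' g' where "continuous_on {a..b} f'" "continuous_on {a..b} g'"
    "\<And>t. t \<in> {a..b} \<Longrightarrow> (f has_vector_derivative f' t) (at t within {a..b})"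
    "\<And>t. t \<in> {a..b} \<Longrightarrow> (g has_vector_derivative g' t) (at t within {a..b})"
    using assms unfolding C1_on_def by blast
  then show ?thesis unfolding C1_on_def
    by (intro exI[of _ "\<lambda>t. f' t + c *\<^sub>R g' t"]) (auto intro!: continuous_intros derivative_eq_intros)
qed

lemma C1_on_scaleR_vector:
  fixes f :: "real \<Rightarrow> real"
  assumes "C1_on a b f"
  shows "C1_on a b (\<lambda>s. f s *\<^sub>R v)"
proof -
  obtain f' where "continuous_on {a..b} f'"
    "\<And>t. t \<in> {a..b} \<Longrightarrow> (f has_real_derivative f' t) (at t within {a..b})"
    using C1_onE_real[OF assms] by blast
  then show ?thesis unfolding C1_on_def
    by (intro exI[of _ "\<lambda>t. f' t *\<^sub>R v"])
      (auto intro!: continuous_intros derivative_eq_intros simp: has_real_derivative_iff_has_vector_derivative)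
qed

lemma C1_on_component:
  fixes x :: "real \<Rightarrow> real^'n"
  assumes "C1_on a b x"
  shows "C1_on a b (\<lambda>s. x s $ j)"
proof -
  obtain x' where x': "continuous_on {a..b} x'"
    "\<And>t. t \<in> {a..b} \<Longrightarrow> (x has_vector_derivative x' t) (at t within {a..b})"
    using assms unfolding C1_on_def by blast
  have "((\<lambda>s. x s $ j) has_vector_derivative x' t $ j) (at t within {a..b})" if "t \<in> {a..b}" for t
    using bounded_linear.has_derivative[OF bounded_linear_vec_nth x'(2)[OF that, unfolded has_vector_derivative_def]]
    by (simp add: has_vector_derivative_def)
  with x'(1) show ?thesis unfolding C1_on_def
    by (intro exI[of _ "\<lambda>t. x' t $ j"]) (auto intro!: continuous_intros)
qed

lemma C1_on_powr_shift:
  assumes "r > 1"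
  shows "C1_on a b (\<lambda>t. (t - a) powr r)"
proof (rule C1_onI_real)
  show "continuous_on {a..b} (\<lambda>t. r * (t - a) powr (r - 1))"
    using assms by (intro continuous_intros continuous_on_powr') auto
  fix t assume t: "t \<in> {a..b}"
  show "((\<lambda>t. (t - a) powr r) has_real_derivative r * (t - a) powr (r - 1)) (at t within {a..b})"
  proof (cases "a < t")
    case True
    then show ?thesis by (rule has_real_derivative_powr_shift)
  next
    case False
    then have [simp]: "t = a" using t by simp
    have "continuous_on {a..b} (\<lambda>y. (y - a) powr (r - 1))"
      using assms by (intro continuous_on_powr' continuous_intros) auto
    then have "((\<lambda>y. (y - a) powr (r - 1)) \<longlongrightarrow> 0) (at a within {a..b})"
      using assms t by (auto simp: continuous_on_def dest: bspec[of _ _ a])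
    then have "((\<lambda>y. ((y - a) powr r - (a - a) powr r) / (y - a)) \<longlongrightarrow> 0) (at a within {a..b})"
      by (rule Lim_transform_within[OF _ zero_less_one]) (auto simp: powr_diff)
    then show ?thesis using assms by (simp add: has_field_derivative_iff)
  qed
qed

lemma caputo_eq_integral:
  fixes f f' :: "real \<Rightarrow> real"
  assumes t: "t \<in> {a..b}"
    and f': "\<And>\<tau>. \<tau> \<in> {a..b} \<Longrightarrow> (f has_real_derivative f' \<tau>) (at \<tau> within {a..b})"
  shows "caputo \<alpha> a f t = 1 / Gamma (1 - \<alpha>) * integral {a..t} (\<lambda>\<tau>. (t - \<tau>) powr (-\<alpha>) * f' \<tau>)"
proof (cases "a < t")
  case True
  have "vector_derivative f (at \<tau> within {a..t}) = f' \<tau>" if "\<tau> \<in> {a..t}" for \<tau>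
    using that t True f'[of \<tau>]
    by (intro vector_derivative_within_closed_interval)
      (auto intro: DERIV_subset simp: has_real_derivative_iff_has_vector_derivative[symmetric])
  then show ?thesis unfolding caputo_def by (metis (no_types, lifting) integral_cong)
next
  case False
  then show ?thesis using \<open>t \<in> {a..b}\<close> by (cases "t = a") (auto simp: caputo_def)
qed

lemma caputo_const: "caputo \<alpha> a (\<lambda>s. c) t = 0"
  using caputo_eq_integral[of t a t "\<lambda>s. c" "\<lambda>_. 0" \<alpha>]
  by (cases "a \<le> t") (auto simp: caputo_def integral_null)

lemma caputo_linear:
  fixes f g :: "real \<Rightarrow> real"
  assumes f: "C1_on a b f" and g: "C1_on a b g" and t: "t \<in> {a..b}" and \<alpha>: "\<alpha> < 1"
  shows "caputo \<alpha> a (\<lambda>s. c * f s + d * g s) t = c * caputo \<alpha> a f t + d * caputo \<alpha> a g t"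
proof -
  obtain f' where f': "\<And>t. t \<in> {a..b} \<Longrightarrow> (f has_real_derivative f' t) (at t within {a..b})"
    and cf': "continuous_on {a..t} f'"
    using C1_onE_real[OF f] t by (metis atLeastAtMost_iff atLeastatMost_subset_iff continuous_on_subset order_refl)
  obtain g' where g': "\<And>t. t \<in> {a..b} \<Longrightarrow> (g has_real_derivative g' t) (at t within {a..b})"
    and cg': "continuous_on {a..t} g'"
    using C1_onE_real[OF g] t by (metis atLeastAtMost_iff atLeastatMost_subset_iff continuous_on_subset order_refl)
  have integrable: "(\<lambda>\<tau>. (t - \<tau>) powr (-\<alpha>) * h \<tau>) integrable_on {a..t}"
    if "continuous_on {a..t} h" for h
    using absolutely_integrable_continuous_times_kernel[OF that has_integral_powr_kernel_left[OF _ \<alpha>]] t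
    by (auto simp: mult.commute dest: set_lebesgue_integral_eq_integral(1))
  have "caputo \<alpha> a (\<lambda>s. c * f s + d * g s) t
      = 1 / Gamma (1 - \<alpha>) * integral {a..t} (\<lambda>\<tau>. c * ((t - \<tau>) powr (-\<alpha>) * f' \<tau>) + d * ((t - \<tau>) powr (-\<alpha>) * g' \<tau>))"
    using t f' g' by (subst caputo_eq_integral[of t a b _ "\<lambda>\<tau>. c * f' \<tau> + d * g' \<tau>"])
      (auto intro!: derivative_eq_intros simp: algebra_simps)
  also have "\<dots> = 1 / Gamma (1 - \<alpha>) * (c * integral {a..t} (\<lambda>\<tau>. (t - \<tau>) powr (-\<alpha>) * f' \<tau>)
                                        + d * integral {a..t} (\<lambda>\<tau>. (t - \<tau>) powr (-\<alpha>) * g' \<tau>))"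
    using integrable[OF cf'] integrable[OF cg']
    by (subst integral_add) (auto intro: integrable_on_mult_right)
  also have "\<dots> = c * caputo \<alpha> a f t + d * caputo \<alpha> a g t"
    using caputo_eq_integral[OF t f', of \<alpha>] caputo_eq_integral[OF t g', of \<alpha>] by (simp add: algebra_simps)
  finally show ?thesis .
qed

lemma has_integral_Beta_rescaled:
  fixes a t p q :: real
  assumes at: "a < t" and p: "0 < p" and q: "0 < q"
  shows "((\<lambda>\<tau>. ((\<tau> - a) / (t - a)) powr (p - 1) * ((t - \<tau>) / (t - a)) powr (q - 1))
           has_integral (t - a) * Beta p q) {a..t}"
proof -
  define h where "h = t - a"
  have h: "h > 0" using at by (simp add: h_def)
  from has_integral_affinity[OF has_integral_Beta_real[OF p q, folded cbox_interval], of "1/h" "-a/h"] h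
  have "((\<lambda>\<tau>. ((1/h) * \<tau> + - a/h) powr (p - 1) * (1 - ((1/h) * \<tau> + - a/h)) powr (q - 1))
           has_integral h * Beta p q) ((\<lambda>x. h * x + a) ` {0..1})"
    by (simp add: field_simps)
  moreover have "(\<lambda>x. h * x + a) ` {0..1} = {a..t}"
    using h by (subst image_affinity_atLeastAtMost) (auto simp: h_def)
  moreover have "(1/h) * \<tau> + - a/h = (\<tau> - a) / h" for \<tau>
    using h by (simp add: field_simps)
  moreover have "1 - (\<tau> - a) / h = (t - \<tau>) / h" for \<tau>
  proof -
    have "1 - (\<tau> - a) / h = (h - (\<tau> - a)) / h" using h by (simp add: diff_divide_distrib)
    then show ?thesis by (simp add: h_def)
  qed
  ultimately show ?thesis unfolding h_def by (simp only:)
qed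

lemma has_integral_kernel_power:
  fixes a t \<alpha> :: real
  assumes at: "a < t" and \<alpha>: "\<alpha> < 1" and n: "1 \<le> n"
  shows "((\<lambda>\<tau>. (t - \<tau>) powr (-\<alpha>) * (\<tau> - a) ^ (n - 1)) has_integral
           Beta (real n) (1 - \<alpha>) * (t - a) powr (real n - \<alpha>)) {a..t}"
proof -
  define h where "h = t - a"
  have h: "h > 0" using at by (simp add: h_def)
  have B: "((\<lambda>\<tau>. ((\<tau> - a) / h) powr (real n - 1) * ((t - \<tau>) / h) powr (-\<alpha>))
      has_integral h * Beta (real n) (1 - \<alpha>)) {a..t}"
    using has_integral_Beta_rescaled[OF at, of "real n" "1 - \<alpha>"] n \<alpha> by (simp add: h_def)
  have "h powr (real n - 1 - \<alpha>) * (h * Beta (real n) (1 - \<alpha>))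
      = Beta (real n) (1 - \<alpha>) * (h powr (real n - 1 - \<alpha>) * h powr 1)"
    using h by simp
  also have "\<dots> = Beta (real n) (1 - \<alpha>) * h powr (real n - 1 - \<alpha> + 1)"
    by (simp only: powr_add)
  also have "\<dots> = Beta (real n) (1 - \<alpha>) * (t - a) powr (real n - \<alpha>)"
    by (simp add: h_def)
  finally have I: "((\<lambda>\<tau>. h powr (real n - 1 - \<alpha>) * (((\<tau> - a) / h) powr (real n - 1) * ((t - \<tau>) / h) powr (-\<alpha>)))
        has_integral Beta (real n) (1 - \<alpha>) * (t - a) powr (real n - \<alpha>)) {a..t}"
    using has_integral_mult_right[OF B] by metis
  \<comment> \<open>The point \<open>\<tau> = a\<close> is exceptional because \<open>0 powr 0 = 0\<close> but \<open>0 ^ 0 = 1\<close>.\<close>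
  show ?thesis
  proof (rule has_integral_spike_finite[OF _ _ I])
    fix \<tau> assume \<tau>: "\<tau> \<in> {a..t} - {a}"
    then have "\<tau> - a > 0" "t - \<tau> \<ge> 0" by auto
    have "h powr (real n - 1 - \<alpha>) * (((\<tau> - a) / h) powr (real n - 1) * ((t - \<tau>) / h) powr (-\<alpha>))
        = (h powr (real n - 1) * h powr (-\<alpha>))
          * ((\<tau> - a) powr (real n - 1) / h powr (real n - 1) * ((t - \<tau>) powr (-\<alpha>) / h powr (-\<alpha>)))"
      using h \<open>\<tau> - a > 0\<close> \<open>t - \<tau> \<ge> 0\<close> by (simp add: powr_divide powr_add[symmetric])
    also have "\<dots> = (t - \<tau>) powr (-\<alpha>) * (\<tau> - a) powr real (n - 1)"
      using h n by (simp add: of_nat_diff)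
    also have "\<dots> = (t - \<tau>) powr (-\<alpha>) * (\<tau> - a) ^ (n - 1)"
      using \<open>\<tau> - a > 0\<close> by (simp add: powr_realpow)
    finally show "(t - \<tau>) powr (-\<alpha>) * (\<tau> - a) ^ (n - 1)
        = h powr (real n - 1 - \<alpha>) * (((\<tau> - a) / h) powr (real n - 1) * ((t - \<tau>) / h) powr (-\<alpha>))"
      by simp
  qed simp
qed

lemma caputo_power:
  assumes \<alpha>: "\<alpha> < 1" and m: "1 \<le> m" and t: "a \<le> t"
  shows "caputo \<alpha> a (\<lambda>s. (s - a) ^ m) t = Gamma (real m + 1) / Gamma (real m + 1 - \<alpha>) * (t - a) powr (real m - \<alpha>)"
proof (cases "a < t")
  case True
  have "caputo \<alpha> a (\<lambda>s. (s - a) ^ m) t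
      = 1 / Gamma (1 - \<alpha>) * integral {a..t} (\<lambda>\<tau>. (t - \<tau>) powr (-\<alpha>) * (real m * (\<tau> - a) ^ (m - 1)))"
    by (rule caputo_eq_integral[of t a t]) (use t in \<open>auto intro!: derivative_eq_intros\<close>)
  also have "\<dots> = real m * Beta (real m) (1 - \<alpha>) / Gamma (1 - \<alpha>) * (t - a) powr (real m - \<alpha>)"
    using integral_unique[OF has_integral_mult_right[OF has_integral_kernel_power[OF True \<alpha> m], of "real m"]]
    by (simp add: mult_ac)
  also have "\<dots> = Gamma (real m + 1) / Gamma (real m + 1 - \<alpha>) * (t - a) powr (real m - \<alpha>)"
  proof -
    have "real m \<notin> \<int>\<^sub>\<le>\<^sub>0" using m by (auto elim!: nonpos_Ints_cases)
    then have "Gamma (real m + 1) = real m * Gamma (real m)" by (rule Gamma_plus1)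
    moreover have "Gamma (1 - \<alpha>) > 0" using \<alpha> by (intro Gamma_real_pos) simp
    ultimately show ?thesis by (simp add: Beta_def field_simps)
  qed
  finally show ?thesis .
next
  case False
  with t show ?thesis by (simp add: caputo_def)
qed

lemma C1_on_linear_combination:
  fixes f g :: "real \<Rightarrow> real"
  assumes "C1_on a b f" "C1_on a b g"
  shows "C1_on a b (\<lambda>s. c * f s + d * g s)"
proof -
  obtain f' g' where "continuous_on {a..b} f'" "continuous_on {a..b} g'"
    "\<And>t. t \<in> {a..b} \<Longrightarrow> (f has_real_derivative f' t) (at t within {a..b})"
    "\<And>t. t \<in> {a..b} \<Longrightarrow> (g has_real_derivative g' t) (at t within {a..b})"
    using assms by (metis C1_onE_real)
  then show ?thesis
    by (intro C1_onI_real[where f' = "\<lambda>t. c * f' t + d * g' t"])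
      (auto intro!: derivative_eq_intros continuous_intros)
qed

lemma C1_on_power_shift: "C1_on a b (\<lambda>s. (s - a) ^ m)"
  by (intro C1_onI_real[where f' = "\<lambda>s. real m * (s - a) ^ (m - 1)"])
    (auto intro!: derivative_eq_intros continuous_intros)

definition bump :: "nat \<Rightarrow> real \<Rightarrow> real \<Rightarrow> real \<Rightarrow> real" where
  "bump m a b s = (s - a) ^ m * (b - s)"

lemma bump_eq_power_combination: "bump m a b s = (b - a) * (s - a) ^ m + (-1) * (s - a) ^ Suc m"
  by (simp add: bump_def algebra_simps)

lemma has_real_derivative_bump:
  "(bump m a b has_real_derivative real m * (s - a) ^ (m - 1) * (b - s) - (s - a) ^ m) (at s within S)"
  unfolding bump_def by (auto intro!: derivative_eq_intros)

lemma caputo_bump: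
  assumes \<alpha>: "\<alpha> < 1" and m: "1 \<le> m" and t: "t \<in> {a..b}"
  shows "caputo \<alpha> a (bump m a b) t
       = (b - a) * (Gamma (real m + 1) / Gamma (real m + 1 - \<alpha>) * (t - a) powr (real m - \<alpha>))
         + (-1) * (Gamma (real m + 2) / Gamma (real m + 2 - \<alpha>) * (t - a) powr (real m + 1 - \<alpha>))"
proof -
  have "bump m a b = (\<lambda>s. (b - a) * (s - a) ^ m + (-1) * (s - a) ^ Suc m)"
    by (simp add: fun_eq_iff bump_eq_power_combination)
  then show ?thesis
    using caputo_linear[OF C1_on_power_shift[of a b m] C1_on_power_shift[of a b "Suc m"] t \<alpha>,
        where c = "b - a" and d = "-1"]
      caputo_power[OF \<alpha> m, of a t] caputo_power[OF \<alpha>, of "Suc m" a t] t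
    by (simp add: add_ac)
qed

lemma C1_on_caputo_bump:
  assumes \<alpha>: "\<alpha> < 1" and m: "2 \<le> m"
  shows "C1_on a b (caputo \<alpha> a (bump m a b))"
proof (rule C1_on_cong)
  show "C1_on a b (\<lambda>t. ((b - a) * (Gamma (real m + 1) / Gamma (real m + 1 - \<alpha>))) * (t - a) powr (real m - \<alpha>)
         + (- (Gamma (real m + 2) / Gamma (real m + 2 - \<alpha>))) * (t - a) powr (real m + 1 - \<alpha>))"
    using \<alpha> m by (intro C1_on_linear_combination C1_on_powr_shift) auto
qed (use caputo_bump[OF \<alpha>] m in \<open>simp add: algebra_simps\<close>)

lemma integral_mult_caputo_by_parts:
  fixes G \<phi> \<phi>' :: "real \<Rightarrow> real"
  assumes ab: "a \<le> b" and \<alpha>: "\<alpha> < 1"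
    and \<phi>': "\<And>t. t \<in> {a..b} \<Longrightarrow> (\<phi> has_real_derivative \<phi>' t) (at t within {a..b})"
    and c\<phi>': "continuous_on {a..b} \<phi>'" and \<phi>a: "\<phi> a = 0" and \<phi>b: "\<phi> b = 0"
    and G: "continuous_on {a..b} G"
    and I_diff: "\<And>t. t \<in> {a..b} \<Longrightarrow> rl_right_int (1 - \<alpha>) b G differentiable (at t within {a..b})"
    and D_cont: "continuous_on {a..b} (rl_right_deriv \<alpha> a b G)"
  shows "integral {a..b} (\<lambda>t. G t * caputo \<alpha> a \<phi> t)
       = integral {a..b} (\<lambda>t. \<phi> t * rl_right_deriv \<alpha> a b G t)"
proof -
  define I where "I = rl_right_int (1 - \<alpha>) b G"
  define D where "D = rl_right_deriv \<alpha> a b G"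
  have I': "(I has_real_derivative - D t) (at t within {a..b})" if "t \<in> {a..b}" for t
    using I_diff[OF that]
    by (simp add: I_def D_def rl_right_deriv_def has_real_derivative_iff_has_vector_derivative
        vector_derivative_works)
  have C: "caputo \<alpha> a \<phi> t = 1 / Gamma (1 - \<alpha>) * integral {a..t} (\<lambda>\<tau>. (t - \<tau>) powr (-\<alpha>) * \<phi>' \<tau>)"
    if "t \<in> {a..b}" for t
    using caputo_eq_integral[OF that \<phi>', of \<alpha>] .
  have "integral {a..b} (\<lambda>t. G t * caputo \<alpha> a \<phi> t)
      = 1 / Gamma (1 - \<alpha>) * integral {a..b} (\<lambda>t. G t * integral {a..t} (\<lambda>\<tau>. \<phi>' \<tau> * (t - \<tau>) powr (-\<alpha>)))"
    by (subst integral_mult_right[symmetric], intro integral_cong)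
      (simp add: C mult_ac)
  also have "\<dots> = 1 / Gamma (1 - \<alpha>) * integral {a..b} (\<lambda>\<tau>. \<phi>' \<tau> * integral {\<tau>..b} (\<lambda>t. G t * (t - \<tau>) powr (-\<alpha>)))"
    by (simp add: Dirichlet_formula_powr_kernel[OF ab \<alpha> c\<phi>' G])
  also have "\<dots> = integral {a..b} (\<lambda>\<tau>. \<phi>' \<tau> * I \<tau>)"
    by (subst integral_mult_right[symmetric], intro integral_cong)
      (simp add: I_def rl_right_int_def mult_ac)
  also have "\<dots> = integral {a..b} (\<lambda>t. \<phi> t * D t)"
  proof -
    have "((\<lambda>t. \<phi>' t * I t + \<phi> t * (- D t)) has_integral \<phi> b * I b - \<phi> a * I a) {a..b}"
      using ab DERIV_mult[OF \<phi>' I']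
      by (intro fundamental_theorem_of_calculus)
        (auto simp: has_real_derivative_iff_has_vector_derivative mult.commute)
    then have h1: "((\<lambda>t. \<phi>' t * I t + \<phi> t * (- D t)) has_integral 0) {a..b}"
      by (simp add: \<phi>a \<phi>b)
    have h2: "((\<lambda>t. \<phi> t * D t) has_integral integral {a..b} (\<lambda>t. \<phi> t * D t)) {a..b}"
      unfolding D_def by (intro integrable_integral integrable_continuous_interval continuous_intros
          D_cont DERIV_continuous_on[OF \<phi>'])
    from has_integral_add[OF h1 h2]
    have "((\<lambda>t. \<phi>' t * I t) has_integral integral {a..b} (\<lambda>t. \<phi> t * D t)) {a..b}"
      by simp
    then show ?thesis by (simp add: integral_unique)
  qed
  finally show ?thesis by (simp add: D_def)
qed

section \<open>A fundamental lemma with polynomial test functions\<close>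

lemma integral_square_nonpos_imp_zero:
  fixes W :: "real \<Rightarrow> real"
  assumes ab: "a < b" and W: "continuous_on {a..b} W"
    and le: "integral {a..b} (\<lambda>t. W t * W t) \<le> 0" and t: "t \<in> {a..b}"
  shows "W t = 0"
proof -
  have W2: "(\<lambda>t. W t * W t) integrable_on {a..b}"
    by (intro integrable_continuous_interval continuous_intros W)
  then have "integral {a..b} (\<lambda>t. W t * W t) \<ge> 0" by (intro integral_nonneg) auto
  with le W2 have "((\<lambda>t. W t * W t) has_integral 0) (cbox a b)"
    by (metis antisym cbox_interval has_integral_integral)
  then have "W t * W t = 0"
    using has_integral_0_cbox_imp_0[of a b "\<lambda>t. W t * W t" t] t ab
    by (auto intro!: continuous_intros W simp: box_real)
  then show ?thesis by simp
qed

lemma integral_polynomial_orthogonal: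
  fixes W :: "real \<Rightarrow> real"
  assumes W: "continuous_on {a..b} W"
    and orth: "\<And>k. integral {a..b} (\<lambda>t. W t * (t - a) ^ k) = 0"
  shows "integral {a..b} (\<lambda>t. W t * (\<Sum>i\<le>n. c i * (t - a) ^ i)) = 0"
proof -
  have "integral {a..b} (\<lambda>t. W t * (\<Sum>i\<le>n. c i * (t - a) ^ i))
      = (\<Sum>i\<le>n. c i * integral {a..b} (\<lambda>t. W t * (t - a) ^ i))"
    by (simp add: sum_distrib_left mult_ac integral_sum integrable_continuous_interval
        continuous_intros W flip: integral_mult_right)
  then show ?thesis by (simp add: orth)
qed

lemma integral_power_orthogonal_imp_zero:
  fixes W :: "real \<Rightarrow> real"
  assumes ab: "a < b" and W: "continuous_on {a..b} W"
    and orth: "\<And>k. integral {a..b} (\<lambda>t. W t * (t - a) ^ k) = 0"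
    and t: "t \<in> {a..b}"
  shows "W t = 0"
proof (rule integral_square_nonpos_imp_zero[OF ab W _ t])
  obtain M where M: "\<And>t. t \<in> {a..b} \<Longrightarrow> \<bar>W t\<bar> \<le> M"
    using compact_imp_bounded[OF compact_continuous_image[OF W compact_Icc]]
    by (auto simp: bounded_iff) (meson atLeastAtMost_iff)
  have M0: "M \<ge> 0" using M[OF t] by simp
  have "integral {a..b} (\<lambda>t. W t * W t) \<le> 0 + e" if e: "e > 0" for e
  proof -
    define \<delta> where "\<delta> = e / (M * (b - a) + 1)"
    have \<delta>: "\<delta> > 0" using e M0 ab by (simp add: \<delta>_def add_nonneg_pos)
    have "continuous_on {0..b - a} (\<lambda>u. W (u + a))"
      by (rule continuous_on_compose2[OF W]) (auto intro!: continuous_intros)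
    then obtain p where p: "real_polynomial_function p" "\<And>u. u \<in> {0..b - a} \<Longrightarrow> \<bar>W (u + a) - p u\<bar> < \<delta>"
      using Stone_Weierstrass_real_polynomial_function[OF compact_Icc _ \<delta>] by blast
    obtain c n where pc: "p = (\<lambda>u. \<Sum>i\<le>n. c i * u ^ i)"
      using p(1) real_polynomial_function_iff_sum by blast
    have cp: "continuous_on {a..b} (\<lambda>t. p (t - a))" unfolding pc by (intro continuous_intros)
    have "integral {a..b} (\<lambda>t. W t * W t)
        = integral {a..b} (\<lambda>t. W t * (W t - p (t - a))) + integral {a..b} (\<lambda>t. W t * p (t - a))"
      by (subst integral_add[symmetric])
        (auto intro!: integrable_continuous_interval continuous_intros W cp simp: algebra_simps)
    also have "integral {a..b} (\<lambda>t. W t * p (t - a)) = 0"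
      unfolding pc by (rule integral_polynomial_orthogonal[OF W orth])
    also have "integral {a..b} (\<lambda>t. W t * (W t - p (t - a))) \<le> integral {a..b} (\<lambda>t. M * \<delta>)"
    proof (rule integral_le)
      show "(\<lambda>t. W t * (W t - p (t - a))) integrable_on {a..b}"
        by (intro integrable_continuous_interval continuous_intros W cp)
      fix t assume t: "t \<in> {a..b}"
      have "\<bar>W t - p (t - a)\<bar> \<le> \<delta>" using p(2)[of "t - a"] t by simp
      then have "\<bar>W t * (W t - p (t - a))\<bar> \<le> M * \<delta>"
        unfolding abs_mult using M[OF t] by (intro mult_mono) auto
      then show "W t * (W t - p (t - a)) \<le> M * \<delta>" by simp
    qed auto
    also have "integral {a..b} (\<lambda>t. M * \<delta>) = e * (M * (b - a) / (M * (b - a) + 1))"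
      using ab by (simp add: \<delta>_def)
    also have "\<dots> \<le> e"
      using ab M0 e by (intro mult_left_le) (auto simp: divide_le_eq_1 add_nonneg_pos)
    finally show ?thesis by simp
  qed
  then show "integral {a..b} (\<lambda>t. W t * W t) \<le> 0" by (rule field_le_epsilon)
qed

lemma integral_bump_orthogonal_imp_zero:
  fixes F :: "real \<Rightarrow> real"
  assumes ab: "a < b" and F: "continuous_on {a..b} F"
    and orth: "\<And>m. 2 \<le> m \<Longrightarrow> integral {a..b} (\<lambda>t. F t * bump m a b t) = 0"
    and t: "t \<in> {a..b}"
  shows "F t = 0"
proof -
  have "F s = 0" if s: "s \<in> {a<..<b}" for s
  proof -
    have "F s * bump 2 a b s = 0"
    proof (rule integral_power_orthogonal_imp_zero[OF ab, where W = "\<lambda>t. F t * bump 2 a b t"])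
      show "continuous_on {a..b} (\<lambda>t. F t * bump 2 a b t)"
        unfolding bump_def by (intro continuous_intros F)
      show "integral {a..b} (\<lambda>t. F t * bump 2 a b t * (t - a) ^ k) = 0" for k
        using orth[of "k + 2"] by (simp add: bump_def power_add power2_eq_square mult_ac)
    qed (use s in auto)
    then show ?thesis using s by (simp add: bump_def)
  qed
  then have "{a<..<b} \<subseteq> {s \<in> {a..b}. F s = 0}" by auto
  moreover have "closed {s \<in> {a..b}. F s = 0}"
    by (rule continuous_closed_preimage_constant[OF F]) auto
  ultimately have "closure {a<..<b} \<subseteq> {s \<in> {a..b}. F s = 0}" by (rule closure_minimal)
  then show ?thesis using ab t by auto
qed

section \<open>Dependence of the solution on the variation\<close>

lemma mvt_state_increment:
  fixes F :: "real \<times> 'c::real_inner \<Rightarrow> real" and G :: "real \<times> 'c \<Rightarrow> 'c"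
  assumes F': "\<forall>p \<in> {a..b} \<times> UNIV.
      (F has_derivative (\<lambda>(dt, dc). Ft p * dt + G p \<bullet> dc)) (at p within {a..b} \<times> UNIV)"
    and t: "t \<in> {a..b}"
  obtains \<theta> where "\<theta> \<in> {0..1}" "F (t, y + h) - F (t, y) = G (t, y + \<theta> *\<^sub>R h) \<bullet> h"
proof -
  define \<gamma> where "\<gamma> s = (t, y + s *\<^sub>R h)" for s :: real
  have \<gamma>': "(\<gamma> has_derivative (\<lambda>ds. (0, ds *\<^sub>R h))) (at s within {0..1})" for s
    unfolding \<gamma>_def by (auto intro!: derivative_eq_intros)
  have \<gamma>_in: "\<gamma> ` {0..1} \<subseteq> {a..b} \<times> UNIV" using t by (auto simp: \<gamma>_def)
  have F'': "(F has_derivative (\<lambda>(dt, dc). Ft p * dt + G p \<bullet> dc)) (at p within {a..b} \<times> UNIV)"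
    if "p \<in> {a..b} \<times> UNIV" for p
    using F' that by blast
  have "((\<lambda>s. F (\<gamma> s)) has_derivative (\<lambda>ds. ds * (G (\<gamma> s) \<bullet> h))) (at s within {0..1})"
    if "s \<in> {0..1}" for s
    using has_derivative_in_compose2[OF F'' \<gamma>_in that \<gamma>'] by simp
  from mvt_very_simple[of 0 1 "\<lambda>s. F (\<gamma> s)", OF _ this]
  obtain \<theta> where "\<theta> \<in> {0..1}" "F (\<gamma> 1) - F (\<gamma> 0) = G (\<gamma> \<theta>) \<bullet> h"
    by auto
  then show ?thesis using that by (simp add: \<gamma>_def)
qed

lemma compact_tube:
  fixes \<gamma> :: "real \<Rightarrow> 'c::euclidean_space"
  assumes "continuous_on {a..b} \<gamma>"
  shows "compact ((\<lambda>(t, h). (t, \<gamma> t + h)) ` ({a..b} \<times> cball 0 r))"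
proof (rule compact_continuous_image)
  show "continuous_on ({a..b} \<times> cball 0 r) (\<lambda>(t, h). (t, \<gamma> t + h))"
    unfolding case_prod_beta
    by (intro continuous_intros continuous_on_compose2[OF assms continuous_on_fst]) auto
qed (intro compact_Times compact_Icc compact_cball)

lemma lipschitz_near_curve:
  fixes F :: "real \<times> 'c::euclidean_space \<Rightarrow> real" and G :: "real \<times> 'c \<Rightarrow> 'c"
  assumes F': "\<forall>p \<in> {a..b} \<times> UNIV.
      (F has_derivative (\<lambda>(dt, dc). Ft p * dt + G p \<bullet> dc)) (at p within {a..b} \<times> UNIV)"
    and G: "continuous_on ({a..b} \<times> UNIV) G" and \<gamma>: "continuous_on {a..b} \<gamma>"
  obtains M where "M \<ge> 0"
    "\<And>t h. t \<in> {a..b} \<Longrightarrow> norm h \<le> r \<Longrightarrow> \<bar>F (t, \<gamma> t + h) - F (t, \<gamma> t)\<bar> \<le> M * norm h"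
proof -
  define K where "K = (\<lambda>(t, h). (t, \<gamma> t + h)) ` ({a..b} \<times> cball 0 r)"
  have "continuous_on K G" by (rule continuous_on_subset[OF G]) (auto simp: K_def)
  moreover have "compact K" unfolding K_def by (rule compact_tube[OF \<gamma>])
  ultimately have "bounded (G ` K)" by (intro compact_imp_bounded compact_continuous_image)
  then obtain M where M: "\<And>q. q \<in> K \<Longrightarrow> norm (G q) \<le> M"
    unfolding bounded_iff by auto
  show ?thesis
  proof (rule that[of "max M 0"])
    fix t and h :: 'c assume t: "t \<in> {a..b}" and h: "norm h \<le> r"
    obtain \<theta> where \<theta>: "\<theta> \<in> {0..1}" "F (t, \<gamma> t + h) - F (t, \<gamma> t) = G (t, \<gamma> t + \<theta> *\<^sub>R h) \<bullet> h"
      using mvt_state_increment[OF F' t] by blast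
    have "norm (\<theta> *\<^sub>R h) \<le> r" using \<theta>(1) h by (auto intro: order_trans[OF mult_left_le_one_le])
    then have "(t, \<gamma> t + \<theta> *\<^sub>R h) \<in> K" using t unfolding K_def by force
    then have "\<bar>G (t, \<gamma> t + \<theta> *\<^sub>R h) \<bullet> h\<bar> \<le> max M 0 * norm h"
      using M by (intro order_trans[OF Cauchy_Schwarz_ineq2] mult_right_mono) force+
    then show "\<bar>F (t, \<gamma> t + h) - F (t, \<gamma> t)\<bar> \<le> max M 0 * norm h" by (simp add: \<theta>(2))
  qed simp
qed

lemma linearization_near_curve:
  fixes F :: "real \<times> 'c::euclidean_space \<Rightarrow> real" and G :: "real \<times> 'c \<Rightarrow> 'c"
  assumes F': "\<forall>p \<in> {a..b} \<times> UNIV.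
      (F has_derivative (\<lambda>(dt, dc). Ft p * dt + G p \<bullet> dc)) (at p within {a..b} \<times> UNIV)"
    and G: "continuous_on ({a..b} \<times> UNIV) G" and \<gamma>: "continuous_on {a..b} \<gamma>"
    and e: "e > 0"
  obtains d where "d > 0" "\<And>t h. t \<in> {a..b} \<Longrightarrow> norm h < d \<Longrightarrow>
      \<bar>F (t, \<gamma> t + h) - F (t, \<gamma> t) - G (t, \<gamma> t) \<bullet> h\<bar> \<le> e * norm h"
proof -
  define K where "K = (\<lambda>(t, h). (t, \<gamma> t + h)) ` ({a..b} \<times> cball 0 1)"
  have "continuous_on K G" by (rule continuous_on_subset[OF G]) (auto simp: K_def)
  then have "uniformly_continuous_on K G"
    using compact_tube[OF \<gamma>] unfolding K_def by (rule compact_uniformly_continuous)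
  then obtain d where d: "d > 0" "\<And>q p. q \<in> K \<Longrightarrow> p \<in> K \<Longrightarrow> dist q p < d \<Longrightarrow> dist (G q) (G p) < e"
    using e unfolding uniformly_continuous_on_def by metis
  show ?thesis
  proof (rule that[of "min d 1"])
    fix t and h :: 'c assume t: "t \<in> {a..b}" and h: "norm h < min d 1"
    obtain \<theta> where \<theta>: "\<theta> \<in> {0..1}" "F (t, \<gamma> t + h) - F (t, \<gamma> t) = G (t, \<gamma> t + \<theta> *\<^sub>R h) \<bullet> h"
      using mvt_state_increment[OF F' t] by blast
    have \<theta>h: "norm (\<theta> *\<^sub>R h) \<le> norm h" using \<theta>(1) by (auto intro: mult_left_le_one_le)
    have "(t, \<gamma> t + \<theta> *\<^sub>R h) \<in> K" "(t, \<gamma> t + 0) \<in> K"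
      using t h \<theta>h unfolding K_def by force+
    moreover have "dist (t, \<gamma> t + \<theta> *\<^sub>R h) (t, \<gamma> t + 0) < d"
      using h \<theta>h by (simp add: dist_Pair_Pair dist_norm)
    ultimately have "norm (G (t, \<gamma> t + \<theta> *\<^sub>R h) - G (t, \<gamma> t)) < e"
      using d(2) by (force simp: dist_norm)
    then have "\<bar>(G (t, \<gamma> t + \<theta> *\<^sub>R h) - G (t, \<gamma> t)) \<bullet> h\<bar> \<le> e * norm h"
      by (intro order_trans[OF Cauchy_Schwarz_ineq2] mult_right_mono) auto
    then show "\<bar>F (t, \<gamma> t + h) - F (t, \<gamma> t) - G (t, \<gamma> t) \<bullet> h\<bar> \<le> e * norm h"
      by (simp add: \<theta>(2) inner_diff_left)
  qed (use d in simp)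
qed

text \<open>Working with \<open>w\<^sup>2 + c\<^sup>2\<close> avoids differentiating \<open>\<bar>w\<bar>\<close>.\<close>

lemma gronwall_quadratic:
  fixes w w' :: "real \<Rightarrow> real"
  assumes w0: "w a = 0" and at: "a \<le> t"
    and w': "\<And>s. s \<in> {a..t} \<Longrightarrow> (w has_real_derivative w' s) (at s within {a..t})"
    and bound: "\<And>s. s \<in> {a..t} \<Longrightarrow> \<bar>w' s\<bar> \<le> M * (c + \<bar>w s\<bar>)" and M: "M \<ge> 0"
  shows "(w t)\<^sup>2 + c\<^sup>2 \<le> c\<^sup>2 * exp (3 * M * (t - a))"
proof -
  define v where "v s = ((w s)\<^sup>2 + c\<^sup>2) * exp (- 3 * M * (s - a))" for s
  define v' where "v' s = 2 * w s * w' s * exp (- 3 * M * (s - a))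
                          + ((w s)\<^sup>2 + c\<^sup>2) * (exp (- 3 * M * (s - a)) * (- 3 * M))" for s
  have v': "(v has_real_derivative v' s) (at s within {a..t})" if "s \<in> {a..t}" for s
    unfolding v_def v'_def using w'[OF that]
    by (auto intro!: derivative_eq_intros simp: power2_eq_square)
  have "v' s \<le> 0" if s: "s \<in> {a..t}" for s
  proof -
    have "2 * w s * w' s \<le> 2 * \<bar>w s\<bar> * \<bar>w' s\<bar>" by (simp add: abs_mult[symmetric])
    also have "\<dots> \<le> 2 * \<bar>w s\<bar> * (M * (c + \<bar>w s\<bar>))"
      using bound[OF s] by (intro mult_left_mono) auto
    also have "\<dots> = M * (2 * c * \<bar>w s\<bar>) + 2 * M * (w s)\<^sup>2"
      by (simp add: algebra_simps power2_eq_square)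
    also have "\<dots> \<le> M * (c\<^sup>2 + (w s)\<^sup>2) + 2 * M * (w s)\<^sup>2"
      using M sum_squares_bound[of c "\<bar>w s\<bar>"] by (intro add_right_mono mult_left_mono) (auto simp: power2_eq_square)
    also have "\<dots> \<le> 3 * M * ((w s)\<^sup>2 + c\<^sup>2)"
      using M by (simp add: algebra_simps)
    finally have "2 * w s * w' s - 3 * M * ((w s)\<^sup>2 + c\<^sup>2) \<le> 0"
      by simp
    then have "(2 * w s * w' s - 3 * M * ((w s)\<^sup>2 + c\<^sup>2)) * exp (- 3 * M * (s - a)) \<le> 0"
      by (simp add: mult_nonpos_nonneg)
    then show ?thesis by (simp add: v'_def algebra_simps)
  qed
  then obtain \<xi> where "\<xi> \<in> {a..t}" "v t - v a = v' \<xi> * (t - a)"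
    using mvt_very_simple[OF at, of v "\<lambda>s d. v' s * d"] v'
    by (auto simp: has_field_derivative_def mult_commute_abs)
  then have "v t \<le> v a"
    using \<open>\<And>s. s \<in> {a..t} \<Longrightarrow> v' s \<le> 0\<close>[of \<xi>] at by (smt (verit) mult_nonpos_nonneg)
  then have "((w t)\<^sup>2 + c\<^sup>2) * exp (- 3 * M * (t - a)) * exp (3 * M * (t - a)) \<le> c\<^sup>2 * exp (3 * M * (t - a))"
    by (intro mult_right_mono) (auto simp: v_def w0)
  then show ?thesis by (simp add: mult.assoc flip: exp_add)
qed

lemma continuity_bootstrap:
  fixes w :: "real \<Rightarrow> real"
  assumes cont: "continuous_on {a..b} w" and wa: "\<bar>w a\<bar> < 1" and B: "B < 1"
    and step: "\<And>t. t \<in> {a..b} \<Longrightarrow> \<forall>s\<in>{a..t}. \<bar>w s\<bar> \<le> 1 \<Longrightarrow> \<bar>w t\<bar> \<le> B"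
    and t: "t \<in> {a..b}"
  shows "\<bar>w t\<bar> < 1"
proof (rule ccontr)
  assume "\<not> \<bar>w t\<bar> < 1"
  define S where "S = {a..b} \<inter> (\<lambda>t. \<bar>w t\<bar>) -` {1..}"
  define ts where "ts = Inf S"
  have "S \<noteq> {}" using t \<open>\<not> \<bar>w t\<bar> < 1\<close> by (auto simp: S_def)
  moreover have bdd: "bdd_below S" by (auto simp: S_def bdd_below_def)
  moreover have "closed S" unfolding S_def
    by (rule continuous_closed_preimage) (auto intro!: continuous_intros cont)
  ultimately have "ts \<in> S" unfolding ts_def by (rule closed_contains_Inf)
  then have ts: "ts \<in> {a..b}" "\<bar>w ts\<bar> \<ge> 1" by (auto simp: S_def)
  have before: "\<bar>w s\<bar> < 1" if "s \<in> {a..b}" "s < ts" for s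
  proof (rule ccontr)
    assume "\<not> \<bar>w s\<bar> < 1"
    then have "s \<in> S" using that by (auto simp: S_def)
    then have "ts \<le> s" unfolding ts_def by (rule cInf_lower[OF _ bdd])
    then show False using that by simp
  qed
  have "a < ts" using ts wa by (cases "ts = a") auto
  have "{a..<ts} \<subseteq> {s \<in> {a..b}. \<bar>w s\<bar> \<le> B}"
  proof
    fix s assume "s \<in> {a..<ts}"
    then have "s \<in> {a..b}" "\<forall>r\<in>{a..s}. \<bar>w r\<bar> \<le> 1"
      using ts before by (auto intro: less_imp_le)
    then show "s \<in> {s \<in> {a..b}. \<bar>w s\<bar> \<le> B}" by (simp add: step)
  qed
  moreover have "closed ({a..b} \<inter> (\<lambda>s. \<bar>w s\<bar>) -` {..B})"
    by (rule continuous_closed_preimage) (auto intro!: continuous_intros cont)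
  then have "closed {s \<in> {a..b}. \<bar>w s\<bar> \<le> B}"
    by (simp add: vimage_def Int_def)
  ultimately have "closure {a..<ts} \<subseteq> {s \<in> {a..b}. \<bar>w s\<bar> \<le> B}"
    by (rule closure_minimal)
  with \<open>a < ts\<close> have "\<bar>w ts\<bar> \<le> B" by (auto dest!: subsetD[of _ _ ts])
  with ts B show False by simp
qed

text \<open>The bound on \<open>w'\<close> is only available while \<open>\<bar>w\<bar> \<le> 1\<close>; the a priori estimate
  keeps \<open>\<bar>w\<bar>\<close> below \<open>1\<close>, so it never leaves that region.\<close>

lemma gronwall_local:
  fixes w w' :: "real \<Rightarrow> real"
  assumes w0: "w a = 0"
    and w': "\<And>t. t \<in> {a..b} \<Longrightarrow> (w has_real_derivative w' t) (at t within {a..b})"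
    and bound: "\<And>t. t \<in> {a..b} \<Longrightarrow> \<bar>w t\<bar> \<le> 1 \<Longrightarrow> \<bar>w' t\<bar> \<le> M * (c + \<bar>w t\<bar>)"
    and M: "M \<ge> 0" and c: "c \<ge> 0" and small: "c * exp (3 * M * (b - a) / 2) < 1"
    and t: "t \<in> {a..b}"
  shows "\<bar>w t\<bar> \<le> c * exp (3 * M * (b - a) / 2)"
proof -
  define B where "B = c * exp (3 * M * (b - a) / 2)"
  have apriori: "\<bar>w t\<bar> \<le> B" if t: "t \<in> {a..b}" and small_before: "\<forall>s\<in>{a..t}. \<bar>w s\<bar> \<le> 1" for t
  proof -
    have "(w t)\<^sup>2 + c\<^sup>2 \<le> c\<^sup>2 * exp (3 * M * (t - a))"
      using t small_before M
      by (intro gronwall_quadratic[where w = w and w' = w', OF w0]) (auto intro: DERIV_subset[OF w'] bound)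
    also have "\<dots> \<le> c\<^sup>2 * exp (3 * M * (b - a))"
      using t M by (intro mult_left_mono) (auto intro!: mult_left_mono)
    also have "\<dots> = B\<^sup>2"
      by (simp add: B_def power_mult_distrib flip: exp_of_nat_mult)
    finally have "(w t)\<^sup>2 \<le> B\<^sup>2" using zero_le_power2[of c] by linarith
    then have "\<bar>w t\<bar>\<^sup>2 \<le> B\<^sup>2" by simp
    moreover have "B \<ge> 0" using c by (simp add: B_def)
    ultimately show ?thesis by (rule power2_le_imp_le)
  qed
  have "continuous_on {a..b} w" using w' by (rule DERIV_continuous_on)
  then have "\<bar>w s\<bar> < 1" if "s \<in> {a..b}" for s
    using continuity_bootstrap[of a b w B, OF _ _ _ apriori that] w0 small by (simp add: B_def)
  then have "\<forall>s\<in>{a..t}. \<bar>w s\<bar> \<le> 1" using t by (fastforce intro: less_imp_le)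
  from apriori[OF t this] show ?thesis by (simp add: B_def)
qed

definition integrating_factor :: "real \<Rightarrow> (real \<Rightarrow> real) \<Rightarrow> real \<Rightarrow> real" where
  "integrating_factor a q t = exp (- integral {a..t} q)"

lemma integrating_factor_pos: "integrating_factor a q t > 0"
  by (simp add: integrating_factor_def)

lemma has_real_derivative_integrating_factor:
  assumes "continuous_on {a..b} q" "t \<in> {a..b}"
  shows "(integrating_factor a q has_real_derivative - q t * integrating_factor a q t) (at t within {a..b})"
proof -
  have "((\<lambda>u. integral {a..u} q) has_real_derivative q t) (at t within {a..b})"
    by (rule integral_has_real_derivative[OF assms])
  from DERIV_chain2[OF DERIV_exp DERIV_minus[OF this]] show ?thesis
    by (simp add: integrating_factor_def[abs_def] mult.commute)
qed

lemma continuous_on_integrating_factor: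
  assumes "continuous_on {a..b} q"
  shows "continuous_on {a..b} (integrating_factor a q)"
  using has_real_derivative_integrating_factor[OF assms] by (rule DERIV_continuous_on)

text \<open>\<open>z \<epsilon>\<close> solves the initial value problem driven by the perturbed argument
  \<open>(X + \<epsilon> E, V + \<epsilon> H)\<close>; in the application \<open>X = x\<close>, \<open>E = \<eta>\<close> and \<open>V\<close>, \<open>H\<close> are their Caputo
  derivatives.\<close>

locale perturbed_ivp =
  fixes a b :: real
    and F Ft Fz :: "real \<times> 'a::euclidean_space \<times> 'b::euclidean_space \<times> real \<Rightarrow> real"
    and Fx :: "real \<times> 'a \<times> 'b \<times> real \<Rightarrow> 'a" and Fv :: "real \<times> 'a \<times> 'b \<times> real \<Rightarrow> 'b"
    and X E :: "real \<Rightarrow> 'a" and V H :: "real \<Rightarrow> 'b" and z :: "real \<Rightarrow> real \<Rightarrow> real"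
  assumes ab: "a < b"
    and F_deriv: "\<forall>p \<in> {a..b} \<times> UNIV.
        (F has_derivative (\<lambda>(dt, dx, dv, dz). Ft p * dt + Fx p \<bullet> dx + Fv p \<bullet> dv + Fz p * dz))
          (at p within {a..b} \<times> UNIV)"
    and Fx_cont: "continuous_on ({a..b} \<times> UNIV) Fx" and Fv_cont: "continuous_on ({a..b} \<times> UNIV) Fv"
    and Fz_cont: "continuous_on ({a..b} \<times> UNIV) Fz"
    and X_cont: "continuous_on {a..b} X" and V_cont: "continuous_on {a..b} V"
    and E_cont: "continuous_on {a..b} E" and H_cont: "continuous_on {a..b} H"
    and z_deriv: "\<And>\<epsilon> t. t \<in> {a..b} \<Longrightarrow>
        (z \<epsilon> has_real_derivative F (t, X t + \<epsilon> *\<^sub>R E t, V t + \<epsilon> *\<^sub>R H t, z \<epsilon> t)) (at t within {a..b})"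
    and z_initial: "\<And>\<epsilon>. z \<epsilon> a = z 0 a"
begin

lemma F_deriv_state:
  "\<forall>p \<in> {a..b} \<times> UNIV. (F has_derivative (\<lambda>(dt, dc). Ft p * dt + (Fx p, Fv p, Fz p) \<bullet> dc))
     (at p within {a..b} \<times> UNIV)"
proof -
  have "(\<lambda>(dt, dx, dv, dz). Ft p * dt + Fx p \<bullet> dx + Fv p \<bullet> dv + Fz p * dz)
      = (\<lambda>(dt, dc). Ft p * dt + (Fx p, Fv p, Fz p) \<bullet> dc)" for p
    by (auto simp: fun_eq_iff inner_Pair add.assoc)
  then show ?thesis using F_deriv by simp
qed

lemma gradient_cont: "continuous_on ({a..b} \<times> UNIV) (\<lambda>p. (Fx p, Fv p, Fz p))"
  by (intro continuous_intros Fx_cont Fv_cont Fz_cont)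

lemma z_cont: "continuous_on {a..b} (z \<epsilon>)"
  using z_deriv by (rule DERIV_continuous_on)

lemma curve_cont: "continuous_on {a..b} (\<lambda>t. (X t, V t, z 0 t))"
  by (intro continuous_intros X_cont V_cont z_cont)

lemma norm_perturbation_le:
  "norm (\<epsilon> *\<^sub>R E t, \<epsilon> *\<^sub>R H t, w) \<le> \<bar>\<epsilon>\<bar> * (norm (E t) + norm (H t)) + \<bar>w\<bar>"
proof -
  have "norm (\<epsilon> *\<^sub>R E t, \<epsilon> *\<^sub>R H t, w) \<le> norm (\<epsilon> *\<^sub>R E t) + norm (\<epsilon> *\<^sub>R H t, w)"
    by (rule norm_Pair_le)
  also have "\<dots> \<le> norm (\<epsilon> *\<^sub>R E t) + (norm (\<epsilon> *\<^sub>R H t) + norm w)"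
    using norm_Pair_le by (rule add_left_mono)
  finally show ?thesis by (simp add: algebra_simps)
qed

lemma perturbation_bound:
  obtains N where "N \<ge> 0" "\<And>t. t \<in> {a..b} \<Longrightarrow> norm (E t) + norm (H t) \<le> N"
proof -
  have "bounded ((\<lambda>t. norm (E t) + norm (H t)) ` {a..b})"
    by (intro compact_imp_bounded compact_continuous_image continuous_intros E_cont H_cont compact_Icc)
  then obtain N where N: "\<forall>t\<in>{a..b}. norm (E t) + norm (H t) \<le> N"
    unfolding bounded_iff by auto
  have "0 \<le> norm (E a) + norm (H a)" by simp
  also have "\<dots> \<le> N" using N ab by simp
  finally show ?thesis using N by (intro that[of N]) auto
qed

lemma F_perturbation_lipschitz:
  obtains M where "M \<ge> 0" "\<And>\<epsilon> t. t \<in> {a..b} \<Longrightarrow>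
      \<bar>\<epsilon>\<bar> * (norm (E t) + norm (H t)) + \<bar>z \<epsilon> t - z 0 t\<bar> \<le> 2 \<Longrightarrow>
      \<bar>F (t, X t + \<epsilon> *\<^sub>R E t, V t + \<epsilon> *\<^sub>R H t, z \<epsilon> t) - F (t, X t, V t, z 0 t)\<bar>
        \<le> M * (\<bar>\<epsilon>\<bar> * (norm (E t) + norm (H t)) + \<bar>z \<epsilon> t - z 0 t\<bar>)"
proof -
  obtain M where M: "M \<ge> 0" and lip: "\<And>t h. t \<in> {a..b} \<Longrightarrow> norm h \<le> 2 \<Longrightarrow>
      \<bar>F (t, (X t, V t, z 0 t) + h) - F (t, (X t, V t, z 0 t))\<bar> \<le> M * norm h"
    by (rule lipschitz_near_curve[OF F_deriv_state gradient_cont curve_cont, where r = 2]) (rule that)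
  show ?thesis
  proof (rule that[OF M])
    fix \<epsilon> t assume t: "t \<in> {a..b}"
      and small: "\<bar>\<epsilon>\<bar> * (norm (E t) + norm (H t)) + \<bar>z \<epsilon> t - z 0 t\<bar> \<le> 2"
    define h where "h = (\<epsilon> *\<^sub>R E t, \<epsilon> *\<^sub>R H t, z \<epsilon> t - z 0 t)"
    have nh: "norm h \<le> \<bar>\<epsilon>\<bar> * (norm (E t) + norm (H t)) + \<bar>z \<epsilon> t - z 0 t\<bar>"
      unfolding h_def by (rule norm_perturbation_le)
    have "(X t, V t, z 0 t) + h = (X t + \<epsilon> *\<^sub>R E t, V t + \<epsilon> *\<^sub>R H t, z \<epsilon> t)"
      by (simp add: h_def)
    moreover note lip[OF t order_trans[OF nh small]]
    ultimately have "\<bar>F (t, X t + \<epsilon> *\<^sub>R E t, V t + \<epsilon> *\<^sub>R H t, z \<epsilon> t) - F (t, X t, V t, z 0 t)\<bar>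
        \<le> M * norm h"
      by (simp only:)
    also have "\<dots> \<le> M * (\<bar>\<epsilon>\<bar> * (norm (E t) + norm (H t)) + \<bar>z \<epsilon> t - z 0 t\<bar>)"
      using nh M by (rule mult_left_mono)
    finally show "\<bar>F (t, X t + \<epsilon> *\<^sub>R E t, V t + \<epsilon> *\<^sub>R H t, z \<epsilon> t) - F (t, X t, V t, z 0 t)\<bar>
        \<le> M * (\<bar>\<epsilon>\<bar> * (norm (E t) + norm (H t)) + \<bar>z \<epsilon> t - z 0 t\<bar>)" .
  qed
qed

lemma solution_lipschitz_in_parameter:
  obtains P \<delta> where "P \<ge> 0" "\<delta> > 0" "\<And>\<epsilon> t. \<bar>\<epsilon>\<bar> < \<delta> \<Longrightarrow> t \<in> {a..b} \<Longrightarrow> \<bar>z \<epsilon> t - z 0 t\<bar> \<le> P * \<bar>\<epsilon>\<bar>"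
proof -
  obtain M where M: "M \<ge> 0" and lip: "\<And>\<epsilon> t. t \<in> {a..b} \<Longrightarrow>
      \<bar>\<epsilon>\<bar> * (norm (E t) + norm (H t)) + \<bar>z \<epsilon> t - z 0 t\<bar> \<le> 2 \<Longrightarrow>
      \<bar>F (t, X t + \<epsilon> *\<^sub>R E t, V t + \<epsilon> *\<^sub>R H t, z \<epsilon> t) - F (t, X t, V t, z 0 t)\<bar>
        \<le> M * (\<bar>\<epsilon>\<bar> * (norm (E t) + norm (H t)) + \<bar>z \<epsilon> t - z 0 t\<bar>)"
    by (rule F_perturbation_lipschitz) (rule that)
  obtain N where N: "N \<ge> 0" "\<And>t. t \<in> {a..b} \<Longrightarrow> norm (E t) + norm (H t) \<le> N"
    by (rule perturbation_bound) (rule that)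
  define K where "K = exp (3 * M * (b - a) / 2)"
  have "N * K \<ge> 0" using N by (simp add: K_def)
  show ?thesis
  proof (rule that[OF \<open>N * K \<ge> 0\<close>, of "1 / (N * K + N + 1)"])
    show "1 / (N * K + N + 1) > 0" using \<open>N * K \<ge> 0\<close> N by simp
    fix \<epsilon> t assume "\<bar>\<epsilon>\<bar> < 1 / (N * K + N + 1)" and t: "t \<in> {a..b}"
    then have "\<bar>\<epsilon>\<bar> * (N * K + N + 1) < 1" using \<open>N * K \<ge> 0\<close> N by (simp add: pos_less_divide_eq)
    moreover have "\<bar>\<epsilon>\<bar> * N \<le> \<bar>\<epsilon>\<bar> * (N * K + N + 1)" "\<bar>\<epsilon>\<bar> * (N * K) \<le> \<bar>\<epsilon>\<bar> * (N * K + N + 1)"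
      using \<open>N * K \<ge> 0\<close> N by (simp_all add: mult_left_mono)
    ultimately have \<epsilon>N: "\<bar>\<epsilon>\<bar> * N \<le> 1" and \<epsilon>NK: "\<bar>\<epsilon>\<bar> * N * K < 1"
      by (simp_all add: mult.assoc)
    define w where "w = (\<lambda>s. z \<epsilon> s - z 0 s)"
    define w' where "w' s = F (s, X s + \<epsilon> *\<^sub>R E s, V s + \<epsilon> *\<^sub>R H s, z \<epsilon> s) - F (s, X s, V s, z 0 s)" for s
    have w0: "w a = 0" using z_initial[of \<epsilon>] by (simp add: w_def)
    have "(w has_real_derivative w' s) (at s within {a..b})" if "s \<in> {a..b}" for s
      unfolding w_def w'_def using DERIV_diff[OF z_deriv[OF that, of \<epsilon>] z_deriv[OF that, of 0]]
      by simp
    moreover have "\<bar>w' s\<bar> \<le> M * (\<bar>\<epsilon>\<bar> * N + \<bar>w s\<bar>)" if s: "s \<in> {a..b}" and "\<bar>w s\<bar> \<le> 1" for s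
    proof -
      have "\<bar>\<epsilon>\<bar> * (norm (E s) + norm (H s)) \<le> \<bar>\<epsilon>\<bar> * N"
        using N(2)[OF s] by (intro mult_left_mono) auto
      moreover from this have "\<bar>w' s\<bar> \<le> M * (\<bar>\<epsilon>\<bar> * (norm (E s) + norm (H s)) + \<bar>w s\<bar>)"
        using lip[OF s, of \<epsilon>] \<epsilon>N \<open>\<bar>w s\<bar> \<le> 1\<close> by (simp add: w_def w'_def)
      ultimately show ?thesis using M by (smt (verit) mult_left_mono)
    qed
    ultimately have "\<bar>w t\<bar> \<le> \<bar>\<epsilon>\<bar> * N * K"
      using gronwall_local[where w = w and w' = w' and M = M and c = "\<bar>\<epsilon>\<bar> * N", OF w0] M N t \<epsilon>NK
      by (simp add: K_def)
    then show "\<bar>z \<epsilon> t - z 0 t\<bar> \<le> N * K * \<bar>\<epsilon>\<bar>" by (simp add: w_def mult_ac)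
  qed
qed

definition \<Lambda> :: "real \<Rightarrow> real" where
  "\<Lambda> = integrating_factor a (\<lambda>\<tau>. Fz (\<tau>, X \<tau>, V \<tau>, z 0 \<tau>))"

definition variation_integrand :: "real \<Rightarrow> real" where
  "variation_integrand t = Fx (t, X t, V t, z 0 t) \<bullet> E t + Fv (t, X t, V t, z 0 t) \<bullet> H t"

definition remainder :: "real \<Rightarrow> real \<Rightarrow> real" where
  "remainder \<epsilon> t = F (t, X t + \<epsilon> *\<^sub>R E t, V t + \<epsilon> *\<^sub>R H t, z \<epsilon> t) - F (t, X t, V t, z 0 t)
     - \<epsilon> * variation_integrand t - Fz (t, X t, V t, z 0 t) * (z \<epsilon> t - z 0 t)"

lemma continuous_on_along_solution:
  assumes "continuous_on ({a..b} \<times> UNIV) f"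
  shows "continuous_on {a..b} (\<lambda>t. f (t, X t, V t, z 0 t))"
  by (rule continuous_on_compose2[OF assms]) (auto intro!: continuous_intros X_cont V_cont z_cont)

lemma \<Lambda>_deriv:
  "t \<in> {a..b} \<Longrightarrow> (\<Lambda> has_real_derivative - Fz (t, X t, V t, z 0 t) * \<Lambda> t) (at t within {a..b})"
  unfolding \<Lambda>_def by (rule has_real_derivative_integrating_factor[OF continuous_on_along_solution[OF Fz_cont]])

lemma \<Lambda>_cont: "continuous_on {a..b} \<Lambda>"
  using \<Lambda>_deriv by (rule DERIV_continuous_on)

lemma variation_integrand_cont: "continuous_on {a..b} variation_integrand"
  unfolding variation_integrand_def
  by (intro continuous_intros continuous_on_along_solution Fx_cont Fv_cont E_cont H_cont)

lemma remainder_has_integral: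
  "((\<lambda>t. \<Lambda> t * remainder \<epsilon> t) has_integral
      \<Lambda> b * (z \<epsilon> b - z 0 b) - \<epsilon> * integral {a..b} (\<lambda>t. \<Lambda> t * variation_integrand t)) {a..b}"
proof -
  define w where "w = (\<lambda>t. z \<epsilon> t - z 0 t)"
  \<comment> \<open>Since \<open>\<Lambda>' = - Fz \<Lambda>\<close>, the term \<open>Fz \<cdot> w\<close> cancels in \<open>(\<Lambda> w)'\<close>.\<close>
  have "((\<lambda>t. \<Lambda> t * w t) has_vector_derivative \<Lambda> t * (\<epsilon> * variation_integrand t + remainder \<epsilon> t)) (at t within {a..b})"
    if t: "t \<in> {a..b}" for t
  proof -
    have "((\<lambda>t. \<Lambda> t * w t) has_real_derivative
        - Fz (t, X t, V t, z 0 t) * \<Lambda> t * w t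
        + \<Lambda> t * (F (t, X t + \<epsilon> *\<^sub>R E t, V t + \<epsilon> *\<^sub>R H t, z \<epsilon> t) - F (t, X t, V t, z 0 t)))
        (at t within {a..b})"
      unfolding w_def using \<Lambda>_deriv[OF t] z_deriv[OF t, of \<epsilon>] z_deriv[OF t, of 0]
      by (auto intro!: derivative_eq_intros)
    then show ?thesis
      by (simp add: has_real_derivative_iff_has_vector_derivative remainder_def w_def algebra_simps)
  qed
  then have "((\<lambda>t. \<Lambda> t * (\<epsilon> * variation_integrand t + remainder \<epsilon> t)) has_integral \<Lambda> b * w b - \<Lambda> a * w a) {a..b}"
    using ab by (intro fundamental_theorem_of_calculus) auto
  moreover have "w a = 0" using z_initial[of \<epsilon>] by (simp add: w_def)
  moreover have "((\<lambda>t. \<epsilon> * (\<Lambda> t * variation_integrand t)) has_integral \<epsilon> * integral {a..b} (\<lambda>t. \<Lambda> t * variation_integrand t)) {a..b}"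
    by (intro has_integral_mult_right integrable_integral integrable_continuous_interval
        continuous_intros \<Lambda>_cont variation_integrand_cont)
  ultimately show ?thesis
    by (auto dest: has_integral_diff simp: w_def algebra_simps)
qed


lemma remainder_small:
  assumes e: "e > 0"
  obtains d where "d > 0" "\<And>\<epsilon> t. \<bar>\<epsilon>\<bar> < d \<Longrightarrow> t \<in> {a..b} \<Longrightarrow> \<bar>remainder \<epsilon> t\<bar> \<le> e * \<bar>\<epsilon>\<bar>"
proof -
  obtain P \<delta> where P: "P \<ge> 0" "\<delta> > 0"
    and lip: "\<And>\<epsilon> t. \<bar>\<epsilon>\<bar> < \<delta> \<Longrightarrow> t \<in> {a..b} \<Longrightarrow> \<bar>z \<epsilon> t - z 0 t\<bar> \<le> P * \<bar>\<epsilon>\<bar>"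
    by (rule solution_lipschitz_in_parameter) (rule that)
  obtain N where N: "N \<ge> 0" "\<And>t. t \<in> {a..b} \<Longrightarrow> norm (E t) + norm (H t) \<le> N"
    by (rule perturbation_bound) (rule that)
  define e' where "e' = e / (N + P + 1)"
  have e': "e' > 0" using e N P by (simp add: e'_def)
  obtain d0 where d0: "d0 > 0" and lin: "\<And>t h. t \<in> {a..b} \<Longrightarrow> norm h < d0 \<Longrightarrow>
      \<bar>F (t, (X t, V t, z 0 t) + h) - F (t, (X t, V t, z 0 t)) - (Fx (t, X t, V t, z 0 t),
         Fv (t, X t, V t, z 0 t), Fz (t, X t, V t, z 0 t)) \<bullet> h\<bar> \<le> e' * norm h"
    by (rule linearization_near_curve[OF F_deriv_state gradient_cont curve_cont e']) (rule that)
  show ?thesis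
  proof (rule that[of "min \<delta> (d0 / (N + P + 1))"])
    show "min \<delta> (d0 / (N + P + 1)) > 0" using P d0 N by simp
    fix \<epsilon> t assume \<epsilon>: "\<bar>\<epsilon>\<bar> < min \<delta> (d0 / (N + P + 1))" and t: "t \<in> {a..b}"
    define h where "h = (\<epsilon> *\<^sub>R E t, \<epsilon> *\<^sub>R H t, z \<epsilon> t - z 0 t)"
    have "\<bar>\<epsilon>\<bar> * (norm (E t) + norm (H t)) \<le> \<bar>\<epsilon>\<bar> * N"
      using N(2)[OF t] by (simp add: mult_left_mono)
    moreover have "\<bar>z \<epsilon> t - z 0 t\<bar> \<le> P * \<bar>\<epsilon>\<bar>" using lip[OF _ t] \<epsilon> by simp
    ultimately have nh: "norm h \<le> (N + P) * \<bar>\<epsilon>\<bar>"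
      using norm_perturbation_le[of \<epsilon> t "z \<epsilon> t - z 0 t"] by (simp add: h_def algebra_simps)
    also have "\<dots> < d0"
    proof -
      have "(N + P) * \<bar>\<epsilon>\<bar> \<le> (N + P + 1) * \<bar>\<epsilon>\<bar>" by (simp add: mult_right_mono)
      also have "\<dots> < d0" using \<epsilon> N P by (simp add: field_simps)
      finally show ?thesis .
    qed
    finally have "\<bar>F (t, (X t, V t, z 0 t) + h) - F (t, (X t, V t, z 0 t)) - (Fx (t, X t, V t, z 0 t),
         Fv (t, X t, V t, z 0 t), Fz (t, X t, V t, z 0 t)) \<bullet> h\<bar> \<le> e' * norm h"
      by (rule lin[OF t])
    moreover have "F (t, (X t, V t, z 0 t) + h) - F (t, (X t, V t, z 0 t)) - (Fx (t, X t, V t, z 0 t),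
         Fv (t, X t, V t, z 0 t), Fz (t, X t, V t, z 0 t)) \<bullet> h = remainder \<epsilon> t"
      by (simp add: h_def remainder_def variation_integrand_def inner_Pair algebra_simps)
    moreover have "e' * norm h \<le> e' * ((N + P + 1) * \<bar>\<epsilon>\<bar>)"
      using nh e' by (intro mult_left_mono) (auto intro: order_trans[OF _ mult_right_mono])
    ultimately show "\<bar>remainder \<epsilon> t\<bar> \<le> e * \<bar>\<epsilon>\<bar>"
      using N P by (simp add: e'_def)
  qed
qed


lemma \<Lambda>_bound:
  obtains C where "C \<ge> 0" "\<And>t. t \<in> {a..b} \<Longrightarrow> \<bar>\<Lambda> t\<bar> \<le> C"
proof -
  have "bounded (\<Lambda> ` {a..b})" by (intro compact_imp_bounded compact_continuous_image \<Lambda>_cont compact_Icc)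
  then obtain C where C: "\<forall>t\<in>{a..b}. \<bar>\<Lambda> t\<bar> \<le> C" unfolding bounded_iff by auto
  moreover have "C \<ge> 0" using C ab by (meson abs_ge_zero atLeastAtMost_iff less_imp_le order_refl order_trans)
  ultimately show ?thesis using that by blast
qed

lemma endpoint_linear_approximation:
  assumes e: "e > 0"
  obtains d where "d > 0" "\<And>\<epsilon>. \<bar>\<epsilon>\<bar> < d \<Longrightarrow>
    \<bar>\<Lambda> b * (z \<epsilon> b - z 0 b) - \<epsilon> * integral {a..b} (\<lambda>t. \<Lambda> t * variation_integrand t)\<bar> \<le> e * \<bar>\<epsilon>\<bar>"
proof -
  obtain C where C: "C \<ge> 0" "\<And>t. t \<in> {a..b} \<Longrightarrow> \<bar>\<Lambda> t\<bar> \<le> C"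
    by (rule \<Lambda>_bound) (rule that)
  define e' where "e' = e / (C * (b - a) + 1)"
  have e': "e' > 0" using e C ab by (simp add: e'_def add_nonneg_pos)
  obtain d where d: "d > 0" and rem: "\<And>\<epsilon> t. \<bar>\<epsilon>\<bar> < d \<Longrightarrow> t \<in> {a..b} \<Longrightarrow> \<bar>remainder \<epsilon> t\<bar> \<le> e' * \<bar>\<epsilon>\<bar>"
    by (rule remainder_small[OF e']) (rule that)
  show ?thesis
  proof (rule that[OF d])
    fix \<epsilon> :: real assume \<epsilon>: "\<bar>\<epsilon>\<bar> < d"
    have "norm (\<Lambda> t * remainder \<epsilon> t) \<le> C * (e' * \<bar>\<epsilon>\<bar>)" if "t \<in> {a..b} - {}" for t
      using C rem[OF \<epsilon>, of t] that by (auto simp: abs_mult intro!: mult_mono)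
    from has_integral_bound_real[OF _ finite.emptyI remainder_has_integral[of \<epsilon>] this] C e'
    have "\<bar>\<Lambda> b * (z \<epsilon> b - z 0 b) - \<epsilon> * integral {a..b} (\<lambda>t. \<Lambda> t * variation_integrand t)\<bar> \<le> C * (e' * \<bar>\<epsilon>\<bar>) * (b - a)"
      using ab by simp
    also have "\<dots> = e * (C * (b - a) / (C * (b - a) + 1)) * \<bar>\<epsilon>\<bar>"
      by (simp add: e'_def)
    also have "\<dots> \<le> e * \<bar>\<epsilon>\<bar>"
      using C ab e by (intro mult_right_mono mult_left_le) (auto simp: divide_le_eq_1 add_nonneg_pos)
    finally show "\<bar>\<Lambda> b * (z \<epsilon> b - z 0 b) - \<epsilon> * integral {a..b} (\<lambda>t. \<Lambda> t * variation_integrand t)\<bar> \<le> e * \<bar>\<epsilon>\<bar>" .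
  qed
qed

lemma has_real_derivative_endpoint:
  "((\<lambda>\<epsilon>. z \<epsilon> b) has_real_derivative integral {a..b} (\<lambda>t. \<Lambda> t * variation_integrand t) / \<Lambda> b) (at 0)"
proof -
  define I where "I = integral {a..b} (\<lambda>t. \<Lambda> t * variation_integrand t)"
  have \<Lambda>b: "\<Lambda> b > 0" by (simp add: \<Lambda>_def integrating_factor_pos)
  have approx: "\<exists>d>0. \<forall>\<epsilon>. norm (\<epsilon> - 0) < d \<longrightarrow>
      norm (z \<epsilon> b - z 0 b - (I / \<Lambda> b) * (\<epsilon> - 0)) \<le> e * norm (\<epsilon> - 0)"
    if e: "e > 0" for e
  proof -
    obtain d where d: "d > 0" and lin: "\<And>\<epsilon>. \<bar>\<epsilon>\<bar> < d \<Longrightarrow> \<bar>\<Lambda> b * (z \<epsilon> b - z 0 b) - \<epsilon> * I\<bar> \<le> e * \<Lambda> b * \<bar>\<epsilon>\<bar>"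
      using endpoint_linear_approximation[of "e * \<Lambda> b"] e \<Lambda>b unfolding I_def by auto
    have "norm (z \<epsilon> b - z 0 b - (I / \<Lambda> b) * \<epsilon>) \<le> e * \<bar>\<epsilon>\<bar>" if "\<bar>\<epsilon>\<bar> < d" for \<epsilon>
    proof -
      have "\<Lambda> b * (z \<epsilon> b - z 0 b - (I / \<Lambda> b) * \<epsilon>) = \<Lambda> b * (z \<epsilon> b - z 0 b) - \<epsilon> * I"
        using \<Lambda>b by (simp add: field_simps)
      then have "\<Lambda> b * \<bar>z \<epsilon> b - z 0 b - (I / \<Lambda> b) * \<epsilon>\<bar> = \<bar>\<Lambda> b * (z \<epsilon> b - z 0 b) - \<epsilon> * I\<bar>"
        using \<Lambda>b by (metis abs_mult abs_of_pos)
      with lin[OF that] have "\<Lambda> b * \<bar>z \<epsilon> b - z 0 b - (I / \<Lambda> b) * \<epsilon>\<bar> \<le> \<Lambda> b * (e * \<bar>\<epsilon>\<bar>)"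
        by (simp add: mult_ac)
      with \<Lambda>b show ?thesis by (simp add: mult_le_cancel_left_pos)
    qed
    with d show ?thesis by auto
  qed
  have "((\<lambda>\<epsilon>. z \<epsilon> b) has_derivative (*) (I / \<Lambda> b)) (at 0)"
    unfolding has_derivative_at_alt by (intro conjI bounded_linear_mult_right allI impI approx)
  then show ?thesis
    unfolding has_field_derivative_def I_def .
qed

end

section \<open>The Euler--Lagrange equation\<close>

lemma caputo_vec_add_scaleR:
  fixes x \<eta> :: "real \<Rightarrow> real^'n"
  assumes "C1_on a b x" "C1_on a b \<eta>" "t \<in> {a..b}" "\<forall>k. \<alpha> $ k < 1"
  shows "caputo_vec \<alpha> a (\<lambda>s. x s + \<epsilon> *\<^sub>R \<eta> s) t = caputo_vec \<alpha> a x t + \<epsilon> *\<^sub>R caputo_vec \<alpha> a \<eta> t"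
  using caputo_linear[OF C1_on_component[OF assms(1)] C1_on_component[OF assms(2)] assms(3),
      where c = 1 and d = \<epsilon>] assms(4)
  by (simp add: caputo_vec_def vec_eq_iff)

lemma caputo_vec_scaleR_axis:
  "caputo_vec \<alpha> a (\<lambda>s. f s *\<^sub>R axis j 1) = (\<lambda>t. caputo (\<alpha> $ j) a f t *\<^sub>R (axis j 1 :: real^'n))"
  by (auto simp: fun_eq_iff caputo_vec_def vec_eq_iff axis_def caputo_const)

lemma admissible_add_variation:
  assumes "admissible \<alpha> a b xa xb x" "variation \<alpha> a b \<eta>" "\<forall>k. \<alpha> $ k < 1"
  shows "admissible \<alpha> a b xa xb (\<lambda>s. x s + \<epsilon> *\<^sub>R \<eta> s)"
proof -
  have x: "C1_on a b x" "C1_on a b (caputo_vec \<alpha> a x)" "x a = xa" "x b = xb"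
    and \<eta>: "C1_on a b \<eta>" "C1_on a b (caputo_vec \<alpha> a \<eta>)" "\<eta> a = 0" "\<eta> b = 0"
    using assms(1,2) by (auto simp: admissible_def variation_def)
  have "C1_on a b (caputo_vec \<alpha> a (\<lambda>s. x s + \<epsilon> *\<^sub>R \<eta> s))"
    by (rule C1_on_cong[OF _ C1_on_add_scaleR[OF x(2) \<eta>(2), where c = \<epsilon>]])
      (simp add: caputo_vec_add_scaleR[OF x(1) \<eta>(1) _ assms(3)])
  with x \<eta> show ?thesis by (simp add: admissible_def C1_on_add_scaleR)
qed

lemma variation_bump_axis:
  assumes "\<alpha> $ j < 1" "2 \<le> m"
  shows "variation \<alpha> a b (\<lambda>s. bump m a b s *\<^sub>R (axis j 1 :: real^'n))"
proof -
  have "C1_on a b (bump m a b)"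
    by (rule C1_onI_real[OF has_real_derivative_bump]) (auto simp: intro!: continuous_intros)
  moreover have "C1_on a b (\<lambda>t. caputo (\<alpha> $ j) a (bump m a b) t *\<^sub>R (axis j 1 :: real^'n))"
    by (intro C1_on_scaleR_vector C1_on_caputo_bump assms)
  moreover have "bump m a b a = 0" "bump m a b b = 0" using assms by (simp_all add: bump_def)
  ultimately show ?thesis by (simp add: variation_def caputo_vec_scaleR_axis C1_on_scaleR_vector)
qed

lemma fractional_euler_lagrange:
  fixes A B :: "real \<Rightarrow> real^'n"
  assumes ab: "a < b" and \<alpha>: "\<alpha> $ j < 1"
    and A: "continuous_on {a..b} A" and B: "continuous_on {a..b} B"
    and I_diff: "\<And>t. t \<in> {a..b} \<Longrightarrow>
        rl_right_int (1 - \<alpha> $ j) b (\<lambda>s. B s $ j) differentiable (at t within {a..b})"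
    and D_cont: "continuous_on {a..b} (rl_right_deriv (\<alpha> $ j) a b (\<lambda>s. B s $ j))"
    and first_variation: "\<And>\<eta>. variation \<alpha> a b \<eta> \<Longrightarrow>
        integral {a..b} (\<lambda>t. A t \<bullet> \<eta> t + B t \<bullet> caputo_vec \<alpha> a \<eta> t) = 0"
    and t: "t \<in> {a..b}"
  shows "A t $ j + rl_right_deriv (\<alpha> $ j) a b (\<lambda>s. B s $ j) t = 0"
proof (rule integral_bump_orthogonal_imp_zero[OF ab _ _ t])
  define D where "D = rl_right_deriv (\<alpha> $ j) a b (\<lambda>s. B s $ j)"
  have Aj: "continuous_on {a..b} (\<lambda>s. A s $ j)" and Bj: "continuous_on {a..b} (\<lambda>s. B s $ j)"
    using A B by (auto intro: continuous_intros)
  show "continuous_on {a..b} (\<lambda>t. A t $ j + D t)"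
    unfolding D_def by (intro continuous_intros Aj D_cont)
  fix m :: nat assume m: "2 \<le> m"
  have bump': "\<And>t. t \<in> {a..b} \<Longrightarrow> (bump m a b has_real_derivative
      real m * (t - a) ^ (m - 1) * (b - t) - (t - a) ^ m) (at t within {a..b})"
    by (rule has_real_derivative_bump)
  have c_bump: "continuous_on {a..b} (bump m a b)" "continuous_on {a..b} (caputo (\<alpha> $ j) a (bump m a b))"
    using C1_on_imp_continuous_on[OF C1_on_caputo_bump[OF \<alpha> m]]
    by (auto simp: bump_def intro!: continuous_intros)
  have ibp: "integral {a..b} (\<lambda>t. B t $ j * caputo (\<alpha> $ j) a (bump m a b) t)
      = integral {a..b} (\<lambda>t. bump m a b t * D t)"
    unfolding D_def
    by (rule integral_mult_caputo_by_parts[OF less_imp_le[OF ab] \<alpha> bump'])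
      (use m in \<open>auto intro!: continuous_intros Bj I_diff D_cont simp: bump_def\<close>)
  have "0 = integral {a..b} (\<lambda>t. A t $ j * bump m a b t + B t $ j * caputo (\<alpha> $ j) a (bump m a b) t)"
    using first_variation[OF variation_bump_axis[OF \<alpha> m]]
    by (simp add: caputo_vec_scaleR_axis inner_axis mult.commute)
  also have "\<dots> = integral {a..b} (\<lambda>t. A t $ j * bump m a b t) + integral {a..b} (\<lambda>t. bump m a b t * D t)"
    by (subst integral_add) (auto intro!: integrable_continuous_interval continuous_intros Aj Bj c_bump
        simp: ibp)
  also have "\<dots> = integral {a..b} (\<lambda>t. (A t $ j + D t) * bump m a b t)"
    by (subst integral_add[symmetric])
      (auto intro!: integrable_continuous_interval continuous_intros Aj c_bump D_cont
        simp: D_def algebra_simps)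
  finally show "integral {a..b} (\<lambda>t. (A t $ j + D t) * bump m a b t) = 0" by simp
qed

lemma first_variation_vanishes:
  fixes L Lt Lz :: "real \<times> (real^'n) \<times> (real^'n) \<times> real \<Rightarrow> real"
    and Lx Lv :: "real \<times> (real^'n) \<times> (real^'n) \<times> real \<Rightarrow> real^'n"
    and zsol :: "(real \<Rightarrow> real^'n) \<Rightarrow> real \<Rightarrow> real"
  assumes ab: "a < b" and \<alpha>: "\<forall>k. \<alpha> $ k < 1"
    and L_deriv: "\<forall>p \<in> {a..b} \<times> (UNIV :: ((real^'n) \<times> (real^'n) \<times> real) set).
        (L has_derivative (\<lambda>(dt, dx, dv, dz). Lt p * dt + Lx p \<bullet> dx + Lv p \<bullet> dv + Lz p * dz))
          (at p within {a..b} \<times> UNIV)"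
    and Lx: "continuous_on ({a..b} \<times> UNIV) Lx" and Lv: "continuous_on ({a..b} \<times> UNIV) Lv"
    and Lz: "continuous_on ({a..b} \<times> UNIV) Lz"
    and z_sol: "\<forall>y. admissible \<alpha> a b xa xb y \<longrightarrow> solves_ivp a b L \<alpha> za y (zsol y)"
    and x: "admissible \<alpha> a b xa xb x" and \<eta>: "variation \<alpha> a b \<eta>"
    and extremum: "((\<lambda>\<epsilon>. zsol (\<lambda>s. x s + \<epsilon> *\<^sub>R \<eta> s) b) has_real_derivative 0) (at 0)"
  shows "integral {a..b} (\<lambda>t. integrating_factor a (\<lambda>\<tau>. Lz (xz \<alpha> a x (zsol x) \<tau>)) t
           * (Lx (xz \<alpha> a x (zsol x) t) \<bullet> \<eta> t + Lv (xz \<alpha> a x (zsol x) t) \<bullet> caputo_vec \<alpha> a \<eta> t)) = 0"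
proof -
  have x1: "C1_on a b x" "C1_on a b (caputo_vec \<alpha> a x)"
    and \<eta>1: "C1_on a b \<eta>" "C1_on a b (caputo_vec \<alpha> a \<eta>)"
    using x \<eta> by (auto simp: admissible_def variation_def)
  have solves: "solves_ivp a b L \<alpha> za (\<lambda>s. x s + \<epsilon> *\<^sub>R \<eta> s) (zsol (\<lambda>s. x s + \<epsilon> *\<^sub>R \<eta> s))" for \<epsilon>
    using z_sol admissible_add_variation[OF x \<eta> \<alpha>] by blast
  interpret perturbed_ivp a b L Lt Lz Lx Lv x \<eta> "caputo_vec \<alpha> a x" "caputo_vec \<alpha> a \<eta>"
    "\<lambda>\<epsilon>. zsol (\<lambda>s. x s + \<epsilon> *\<^sub>R \<eta> s)"
  proof
    fix \<epsilon> t assume t: "t \<in> {a..b}"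
    with solves[of \<epsilon>] have "(zsol (\<lambda>s. x s + \<epsilon> *\<^sub>R \<eta> s) has_real_derivative
        L (xz \<alpha> a (\<lambda>s. x s + \<epsilon> *\<^sub>R \<eta> s) (zsol (\<lambda>s. x s + \<epsilon> *\<^sub>R \<eta> s)) t)) (at t within {a..b})"
      by (simp add: solves_ivp_def)
    then show "(zsol (\<lambda>s. x s + \<epsilon> *\<^sub>R \<eta> s) has_real_derivative
        L (t, x t + \<epsilon> *\<^sub>R \<eta> t, caputo_vec \<alpha> a x t + \<epsilon> *\<^sub>R caputo_vec \<alpha> a \<eta> t,
           zsol (\<lambda>s. x s + \<epsilon> *\<^sub>R \<eta> s) t)) (at t within {a..b})"
      by (simp add: xz_def caputo_vec_add_scaleR[OF x1(1) \<eta>1(1) t \<alpha>])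
  next
    show "zsol (\<lambda>s. x s + \<epsilon> *\<^sub>R \<eta> s) a = zsol (\<lambda>s. x s + 0 *\<^sub>R \<eta> s) a" for \<epsilon>
      using solves[of \<epsilon>] solves[of 0] by (simp add: solves_ivp_def)
  qed (use ab L_deriv Lx Lv Lz x1 \<eta>1 in \<open>auto intro: C1_on_imp_continuous_on\<close>)
  have "integral {a..b} (\<lambda>t. \<Lambda> t * variation_integrand t) / \<Lambda> b = 0"
    using DERIV_unique[OF has_real_derivative_endpoint extremum] .
  then show ?thesis
    by (simp add: \<Lambda>_def variation_integrand_def xz_def integrating_factor_def)
qed

lemma continuous_on_compose_xz:
  assumes "admissible \<alpha> a b xa xb x" "solves_ivp a b L \<alpha> za x z" "continuous_on ({a..b} \<times> UNIV) f"
  shows "continuous_on {a..b} (\<lambda>t. f (xz \<alpha> a x z t))"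
proof (rule continuous_on_compose2[OF assms(3)])
  have "continuous_on {a..b} z"
    using assms(2) unfolding solves_ivp_def by (intro DERIV_continuous_on) blast
  moreover have "continuous_on {a..b} x" "continuous_on {a..b} (caputo_vec \<alpha> a x)"
    using assms(1) by (auto simp: admissible_def intro: C1_on_imp_continuous_on)
  ultimately show "continuous_on {a..b} (xz \<alpha> a x z)"
    unfolding xz_def[abs_def] by (intro continuous_intros)
qed (auto simp: xz_def)

theorem theorem3p1:
  fixes a b za :: real
    and \<alpha> xa xb :: "real^'n"
    and L Lt Lz :: "real \<times> (real^'n) \<times> (real^'n) \<times> real \<Rightarrow> real"
    and Lx Lv :: "real \<times> (real^'n) \<times> (real^'n) \<times> real \<Rightarrow> real^'n"
    and zsol :: "(real \<Rightarrow> real^'n) \<Rightarrow> real \<Rightarrow> real"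
    and x :: "real \<Rightarrow> real^'n"
  assumes ab: "a < b"
    and alpha: "\<forall>j. 0 < \<alpha> $ j \<and> \<alpha> $ j < 1"
    and L_deriv: "\<forall>p \<in> {a..b} \<times> (UNIV :: ((real^'n) \<times> (real^'n) \<times> real) set).
        (L has_derivative (\<lambda>(dt, dx, dv, dz). Lt p * dt + Lx p \<bullet> dx + Lv p \<bullet> dv + Lz p * dz))
          (at p within {a..b} \<times> UNIV)"
    and L_cont: "continuous_on ({a..b} \<times> UNIV) Lt" "continuous_on ({a..b} \<times> UNIV) Lx"
                "continuous_on ({a..b} \<times> UNIV) Lv" "continuous_on ({a..b} \<times> UNIV) Lz"
    and z_sol: "\<forall>y. admissible \<alpha> a b xa xb y \<longrightarrow> solves_ivp a b L \<alpha> za y (zsol y)"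
    and z_diff: "\<forall>\<eta>. variation \<alpha> a b \<eta> \<longrightarrow>
        (\<forall>t\<in>{a..b}. (\<lambda>\<epsilon>. zsol (\<lambda>s. x s + \<epsilon> *\<^sub>R \<eta> s) t) differentiable (at 0))"
    and x_adm: "admissible \<alpha> a b xa xb x"
    and RL: "\<forall>j. (\<forall>t\<in>{a..b}. rl_right_int (1 - \<alpha> $ j) b
                  (\<lambda>s. exp (- integral {a..s} (\<lambda>\<tau>. Lz (xz \<alpha> a x (zsol x) \<tau>)))
                         * Lv (xz \<alpha> a x (zsol x) s) $ j) differentiable (at t within {a..b}))
              \<and> continuous_on {a..b} (rl_right_deriv (\<alpha> $ j) a b
                  (\<lambda>s. exp (- integral {a..s} (\<lambda>\<tau>. Lz (xz \<alpha> a x (zsol x) \<tau>)))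
                         * Lv (xz \<alpha> a x (zsol x) s) $ j))"
    and extremum: "\<forall>\<eta>. variation \<alpha> a b \<eta> \<longrightarrow>
        ((\<lambda>\<epsilon>. zsol (\<lambda>s. x s + \<epsilon> *\<^sub>R \<eta> s) b) has_real_derivative 0) (at 0)"
  shows "\<forall>t\<in>{a..b}. \<forall>j.
     exp (- integral {a..t} (\<lambda>\<tau>. Lz (xz \<alpha> a x (zsol x) \<tau>))) * Lx (xz \<alpha> a x (zsol x) t) $ j
     + rl_right_deriv (\<alpha> $ j) a b
         (\<lambda>s. exp (- integral {a..s} (\<lambda>\<tau>. Lz (xz \<alpha> a x (zsol x) \<tau>)))
                * Lv (xz \<alpha> a x (zsol x) s) $ j) t = 0"
proof (intro ballI allI)
  fix t j assume t: "t \<in> {a..b}"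
  define \<Lambda> where "\<Lambda> = integrating_factor a (\<lambda>\<tau>. Lz (xz \<alpha> a x (zsol x) \<tau>))"
  have \<alpha>: "\<forall>k. \<alpha> $ k < 1" using alpha by blast
  have sol: "solves_ivp a b L \<alpha> za x (zsol x)" using z_sol x_adm by blast
  have cont: "continuous_on {a..b} (\<lambda>t. \<Lambda> t *\<^sub>R f (xz \<alpha> a x (zsol x) t))"
    if "continuous_on ({a..b} \<times> UNIV) f" for f :: "_ \<Rightarrow> real^'n"
    unfolding \<Lambda>_def
    by (intro continuous_intros continuous_on_integrating_factor
        continuous_on_compose_xz[OF x_adm sol] that L_cont(4))
  have "(\<Lambda> t *\<^sub>R Lx (xz \<alpha> a x (zsol x) t)) $ j
      + rl_right_deriv (\<alpha> $ j) a b (\<lambda>s. (\<Lambda> s *\<^sub>R Lv (xz \<alpha> a x (zsol x) s)) $ j) t = 0"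
  proof (rule fractional_euler_lagrange[OF ab _ cont[OF L_cont(2)] cont[OF L_cont(3)] _ _ _ t])
    show "integral {a..b} (\<lambda>t. (\<Lambda> t *\<^sub>R Lx (xz \<alpha> a x (zsol x) t)) \<bullet> \<eta> t
        + (\<Lambda> t *\<^sub>R Lv (xz \<alpha> a x (zsol x) t)) \<bullet> caputo_vec \<alpha> a \<eta> t) = 0"
      if "variation \<alpha> a b \<eta>" for \<eta>
      using first_variation_vanishes[OF ab \<alpha> L_deriv L_cont(2-4) z_sol x_adm that] extremum that
      by (simp add: \<Lambda>_def algebra_simps)
  qed (use \<alpha> RL in \<open>simp_all add: \<Lambda>_def integrating_factor_def\<close>)
  then show "exp (- integral {a..t} (\<lambda>\<tau>. Lz (xz \<alpha> a x (zsol x) \<tau>))) * Lx (xz \<alpha> a x (zsol x) t) $ j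
     + rl_right_deriv (\<alpha> $ j) a b
         (\<lambda>s. exp (- integral {a..s} (\<lambda>\<tau>. Lz (xz \<alpha> a x (zsol x) \<tau>)))
                * Lv (xz \<alpha> a x (zsol x) s) $ j) t = 0"
    by (simp add: \<Lambda>_def integrating_factor_def)
qed

end
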